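(* Let $n\ge6$ and $d_n=\dim\Delta_n$. For $k\ge0$ let $\rho^{(k)}_0$ be a zero of minimal modulus of the $h$-polynomial of the $k$-fold barycentric subdivision $\Delta_n^{(k)}$. Then as $k\to\infty$, $$|\widetilde\chi(\Delta_n)|=H_{1,d_n}\,f^{\Delta_n}_{d_n}\,\bigl|\rho^{(k)}_0\bigr|\,(d_n+1)!^{k}\,(1+o(1)).$$
   Context: For a squarefree positive integer $k$ let $P(k)$ be its set of prime factors ($P(1)=\emptyset$). $\Delta_n$ is the abstract simplicial complex $\{P(k): 1\le k\le n,\ k\text{ squarefree}\}$; a $d$-simplex is a member of cardinality $d+1$, $\dim$ is the maximal such $d$, and $f^{\Delta}_i$ is the number of $i$-simplices ($f^\Delta_{-1}=1$). The reduced Euler characteristic is $\widetilde\chi(\Delta)=\sum_{\sigma\in\Delta}(-1)^{\#\sigma-1}$. The $h$-polynomial of a complex $\Delta$ of dimension $d$ is $h^\Delta(z)=\sum_{i=-1}^{d}f^\Delta_i(z-1)^{d-i}$. The barycentric subdivision $\Delta'$ consists of $\emptyset$ and all sets $\{\sigma_0,\dots,\sigma_m\}$ of nonempty simplices with $\sigma_0\subsetneq\cdots\subsetneq\sigma_m$; $\Delta^{(k)}$ is its $k$-fold iterate. For integers $i,d\ge -1$ define $f_{-1,-1}=1$, $f_{-1,d}=0$ for $d\ge0$, $f_{i,-1}=0$ for $i\ge0$, $f_{i,d}=(i+1)!\,S(d+1,i+1)$ for $i,d\ge0$ ($S$ = Stirling numbers of the second kind); for $d\ge0$ set $F_{d,d}=1$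 and recursively for $-1\le i\le d-1$, $F_{i,d}=\frac{1}{(d+1)!-(i+1)!}\sum_{j=i+1}^{d}f_{i,j}F_{j,d}$; $F_d(z)=\sum_{i=-1}^dF_{i,d}z^{d-i}$ and $H_d(z)=F_d(z-1)=\sum_{i=0}^{d+1}H_{i,d}z^{d+1-i}$. *)

theory Defs
  imports Complex_Main "HOL-Library.FSet" "HOL-Library.Landau_Symbols"
    "HOL-Computational_Algebra.Polynomial" "HOL-Computational_Algebra.Squarefree"
    "HOL-Computational_Algebra.Primes" "HOL-Combinatorics.Stirling"
begin

text \<open>A universe of vertices closed under taking (finite) sets of vertices,
so that iterated barycentric subdivisions live in one type.
Original vertices of Delta_n are primes (Prim p); a vertex of a barycentric
subdivision is a (nonempty, finite) simplex sigma of the previous complex, encoded as Face sigma.\<close>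
datatype hf = Prim nat | Face "hf fset"

type_synonym scomplex = "hf set set"

definition Delta :: "nat \<Rightarrow> scomplex" where
  "Delta n = {Prim ` prime_factors k | k. 1 \<le> k \<and> k \<le> n \<and> squarefree k}"

definition bsd :: "scomplex \<Rightarrow> scomplex" where
  "bsd D = {(\<lambda>\<sigma>. Face (Abs_fset \<sigma>)) ` C | C.
      finite C \<and> C \<subseteq> D - {{}} \<and> (\<forall>\<sigma>\<in>C. \<forall>\<tau>\<in>C. \<sigma> \<subseteq> \<tau> \<or> \<tau> \<subseteq> \<sigma>)}"

text \<open>dimension (as an integer, so that the empty complex {{}} has dimension -1)\<close>
definition cdim :: "scomplex \<Rightarrow> int" where
  "cdim D = int (Max (card ` D)) - 1"

text \<open>f_i = number of i-simplices (f_{-1} = 1 for a nonempty complex)\<close>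
definition fvec :: "scomplex \<Rightarrow> int \<Rightarrow> nat" where
  "fvec D i = card {\<sigma>\<in>D. int (card \<sigma>) = i + 1}"

definition red_euler :: "scomplex \<Rightarrow> real" where
  "red_euler D = (\<Sum>\<sigma>\<in>D. (-1::real) powi (int (card \<sigma>) - 1))"

definition hpoly :: "scomplex \<Rightarrow> complex poly" where
  "hpoly D = pcompose (\<Sum>i\<in>{-1..cdim D}. monom (of_nat (fvec D i)) (nat (cdim D - i))) [:-1, 1:]"

definition min_zero_modulus :: "complex poly \<Rightarrow> real" where
  "min_zero_modulus p = Min (norm ` {z. poly p z = 0})"

definition fcoef :: "int \<Rightarrow> int \<Rightarrow> real" where
  "fcoef i d = (if i = -1 \<and> d = -1 then 1
     else if i = -1 \<and> d \<ge> 0 then 0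
     else if i \<ge> 0 \<and> d = -1 then 0
     else if i \<ge> 0 \<and> d \<ge> 0 then fact (nat (i+1)) * real (Stirling (nat (d+1)) (nat (i+1)))
     else 0)"

function Fcoef :: "int \<Rightarrow> int \<Rightarrow> real" where
  "Fcoef i d = (if d < 0 \<or> i < -1 \<or> i > d then 0
     else if i = d then 1
     else (1 / (fact (nat (d+1)) - fact (nat (i+1)))) *
            (\<Sum>j\<in>{i+1..d}. fcoef i j * Fcoef j d))"
  by auto
termination
  by (relation "measure (\<lambda>(i,d). nat (d - i))") auto

declare Fcoef.simps[simp del]

definition Fpoly :: "int \<Rightarrow> real poly" where
  "Fpoly d = (\<Sum>i\<in>{-1..d}. monom (Fcoef i d) (nat (d - i)))"

definition Hpoly :: "int \<Rightarrow> real poly" where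
  "Hpoly d = pcompose (Fpoly d) [:-1, 1:]"

definition Hcoef :: "int \<Rightarrow> int \<Rightarrow> real" where
  "Hcoef i d = coeff (Hpoly d) (nat (d + 1 - i))"

end

theory Submission
  imports Defs "HOL-Computational_Algebra.Formal_Power_Series"
begin

text \<open>Barycentric subdivision acts on face numbers by an upper triangular matrix: a face with \<open>n\<close>
  vertices gives rise to \<open>a! S(n, a)\<close> faces with \<open>a\<close> vertices. Its top eigenvalue is
  \<open>(d + 1)!\<close>, with eigenvector \<open>(F\<^sub>i\<^sub>,\<^sub>d)\<^sub>i\<close>, so \<open>f(\<Delta>\<^sup>(\<^sup>k\<^sup>)) / (d + 1)!\<^sup>k \<rightarrow> f\<^sub>d (F\<^sub>i\<^sub>,\<^sub>d)\<^sub>i\<close>,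
  while the reduced Euler characteristic \<open>\<chi>\<close> stays fixed. Hence the \<open>h\<close>-polynomial of \<open>\<Delta>\<^sup>(\<^sup>k\<^sup>)\<close>,
  divided by \<open>(d + 1)!\<^sup>k\<close>, is \<open>a\<^sub>k + b\<^sub>k z + O(z\<^sup>2)\<close> near \<open>0\<close> with \<open>\<bar>a\<^sub>k\<bar> = \<bar>\<chi>\<bar> / (d + 1)!\<^sup>k\<close> and
  \<open>b\<^sub>k \<rightarrow> f\<^sub>d H\<^sub>1\<^sub>,\<^sub>d > 0\<close>; identifying this limit uses the symmetry of \<open>F\<^sub>d\<close> under
  \<open>y \<mapsto> -1 - y\<close>. Such a family, real on the real axis, has its smallest zero asymptotic to
  \<open>\<bar>a\<^sub>k\<bar> / b\<^sub>k\<close>.\<close>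

section \<open>Ordered set partitions and chains\<close>

text \<open>\<open>a! S(n, a)\<close> counts the ordered partitions of an \<open>n\<close>-set into \<open>a\<close> blocks;
  \<open>f\<^sub>i\<^sub>,\<^sub>d\<close> is \<open>ordered_partitions (d + 1) (i + 1)\<close>.\<close>
definition ordered_partitions :: "nat \<Rightarrow> nat \<Rightarrow> nat" where
  "ordered_partitions n a = fact a * Stirling n a"

lemma ordered_partitions_Suc_0 [simp]: "ordered_partitions (Suc n) 0 = 0"
  by (simp add: ordered_partitions_def)

lemma ordered_partitions_less [simp]: "n < a \<Longrightarrow> ordered_partitions n a = 0"
  by (simp add: ordered_partitions_def)

lemma ordered_partitions_same [simp]: "ordered_partitions n n = fact n"
  by (simp add: ordered_partitions_def)

lemma ordered_partitions_n_0: "ordered_partitions n 0 = (if n = 0 then 1 else 0)"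
  by (cases n) auto

lemma ordered_partitions_Suc_Suc:
  "ordered_partitions (Suc n) (Suc a) = Suc a * (ordered_partitions n (Suc a) + ordered_partitions n a)"
  by (simp add: ordered_partitions_def algebra_simps)

lemma sum_ordered_partitions_gbinomial:
  fixes y :: real
  shows "(\<Sum>a\<le>n. real (ordered_partitions n a) * (y gchoose a)) = y ^ n"
proof (induction n)
  case 0
  then show ?case by simp
next
  case (Suc n)
  let ?W = "\<lambda>a. real (ordered_partitions n a)"
  have shift: "(\<Sum>a\<le>Suc n. g a) = (\<Sum>a\<le>n. g (Suc a))" if "g 0 = 0" for g :: "nat \<Rightarrow> real"
    unfolding sum.atMost_Suc_shift using that by simp
  have pascal: "real a * (y gchoose a) + real (Suc a) * (y gchoose Suc a) = y * (y gchoose a)" for a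
    by (subst gbinomial_mult_1) (simp add: algebra_simps)
  have "(\<Sum>a\<le>Suc n. real (ordered_partitions (Suc n) a) * (y gchoose a))
      = (\<Sum>a\<le>n. real (Suc a) * (?W (Suc a) + ?W a) * (y gchoose Suc a))"
    by (subst shift) (simp_all add: ordered_partitions_Suc_Suc algebra_simps)
  also have "\<dots> = (\<Sum>a\<le>Suc n. real a * ?W a * (y gchoose a))
                 + (\<Sum>a\<le>n. real (Suc a) * ?W a * (y gchoose Suc a))"
    by (subst shift) (simp_all add: algebra_simps sum.distrib)
  also have "(\<Sum>a\<le>Suc n. real a * ?W a * (y gchoose a)) = (\<Sum>a\<le>n. real a * ?W a * (y gchoose a))"
    by simp
  also have "\<dots> + (\<Sum>a\<le>n. real (Suc a) * ?W a * (y gchoose Suc a)) = (\<Sum>a\<le>n. ?W a * (y * (y gchoose a)))"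
    by (simp add: sum.distrib[symmetric] pascal[symmetric] algebra_simps)
  also have "\<dots> = y * y ^ n"
    by (simp add: Suc.IH[symmetric] sum_distrib_left algebra_simps)
  finally show ?case by simp
qed

lemma gbinomial_minus_one: "((-1::'a::field_char_0) gchoose a) = (-1) ^ a"
  by (subst gbinomial_negated_upper) (simp add: binomial_gbinomial[symmetric])

lemma alternating_sum_ordered_partitions:
  "(\<Sum>a\<le>n. (-1::real) ^ a * real (ordered_partitions n a)) = (-1) ^ n"
  using sum_ordered_partitions_gbinomial[of n "-1"] by (simp add: gbinomial_minus_one mult.commute)

lemma sum_choose_Suc_split:
  fixes g :: "nat \<Rightarrow> 'a::comm_semiring_1"
  shows "(\<Sum>t<Suc n. of_nat (Suc n choose t) * g t)
       = g n + (\<Sum>t<n. of_nat (n choose t) * g t) + (\<Sum>t<n. of_nat (n choose t) * g (Suc t))"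
proof -
  have "(\<Sum>t<Suc n. of_nat (Suc n choose t) * g t)
      = g 0 + (\<Sum>t<n. of_nat (Suc n choose Suc t) * g (Suc t))"
    by (subst sum.lessThan_Suc_shift) simp
  also have "\<dots> = g 0 + (\<Sum>t<n. of_nat (n choose Suc t) * g (Suc t)) + (\<Sum>t<n. of_nat (n choose t) * g (Suc t))"
    by (simp add: sum.distrib algebra_simps)
  also have "g 0 + (\<Sum>t<n. of_nat (n choose Suc t) * g (Suc t)) = (\<Sum>t<Suc n. of_nat (n choose t) * g t)"
    by (subst sum.lessThan_Suc_shift) simp
  also have "\<dots> = g n + (\<Sum>t<n. of_nat (n choose t) * g t)"
    by (simp add: add.commute)
  finally show ?thesis by simp
qed

text \<open>Combinatorially: the complement of the last block is an ordered partition of a proper subset.\<close>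
lemma ordered_partitions_Suc_right:
  "ordered_partitions n (Suc a) = (\<Sum>t<n. (n choose t) * ordered_partitions t a)"
proof (induction n arbitrary: a)
  case 0
  then show ?case by simp
next
  case (Suc n)
  show ?case
  proof (cases a)
    case 0
    have "(\<Sum>t<Suc n. (Suc n choose t) * ordered_partitions t 0) = 1"
      by (subst sum.lessThan_Suc_shift) simp
    moreover have "ordered_partitions (Suc n) (Suc 0) = 1"
      unfolding ordered_partitions_def by (simp only: Stirling_1) simp
    ultimately show ?thesis
      using 0 by simp
  next
    case (Suc b)
    have "(\<Sum>t<n. (n choose t) * ordered_partitions (Suc t) a)
        = Suc b * (ordered_partitions n (Suc a) + ordered_partitions n a)"
      using Suc.IH[of a] Suc.IH[of b]
      by (simp add: Suc ordered_partitions_Suc_Suc sum_distrib_left sum.distrib algebra_simps)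
    then show ?thesis
      using sum_choose_Suc_split[of n "\<lambda>t. ordered_partitions t a"] Suc.IH[of a]
      by (simp add: Suc ordered_partitions_Suc_Suc algebra_simps)
  qed
qed

lemma finite_chain_Union_mem:
  assumes "finite C" "C \<noteq> {}" "chain\<^sub>\<subseteq> C"
  shows "\<Union>C \<in> C"
  using Union_in_chain[OF assms(1,2)] assms(3) by (simp add: chain_subset_alt_def)

lemma chain_subset_mono: "chain\<^sub>\<subseteq> C \<Longrightarrow> C' \<subseteq> C \<Longrightarrow> chain\<^sub>\<subseteq> C'"
  unfolding chain_subset_def by blast

text \<open>Chains of nonempty subsets of \<open>\<sigma>\<close> with top element \<open>\<sigma>\<close>; those with \<open>a\<close> members
  correspond to ordered partitions of \<open>\<sigma>\<close> into \<open>a\<close> blocks (the successive differences).\<close>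
definition covering_chains :: "'a set \<Rightarrow> nat \<Rightarrow> 'a set set set" where
  "covering_chains \<sigma> a = {C. C \<subseteq> Pow \<sigma> - {{}} \<and> chain\<^sub>\<subseteq> C \<and> \<Union>C = \<sigma> \<and> card C = a}"

lemma finite_covering_chains: "finite \<sigma> \<Longrightarrow> finite (covering_chains \<sigma> a)"
  unfolding covering_chains_def by (rule finite_subset[of _ "Pow (Pow \<sigma>)"]) auto

lemma finite_mem_covering_chains: "finite \<sigma> \<Longrightarrow> C \<in> covering_chains \<sigma> a \<Longrightarrow> finite C"
  unfolding covering_chains_def by (auto intro: finite_subset[of _ "Pow \<sigma>"])

lemma covering_chains_0:
  assumes "finite \<sigma>"
  shows "covering_chains \<sigma> 0 = (if \<sigma> = {} then {{}} else {})"
proof -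
  have "C = {}" if "C \<in> covering_chains \<sigma> 0" for C
    using that finite_mem_covering_chains[OF assms that] unfolding covering_chains_def by simp
  then have "covering_chains \<sigma> 0 \<subseteq> {{}}"
    by blast
  moreover have "{} \<in> covering_chains \<sigma> 0 \<longleftrightarrow> \<sigma> = {}"
    unfolding covering_chains_def chain_subset_def by auto
  ultimately show ?thesis
    by (cases "\<sigma> = {}") auto
qed

lemma covering_chains_empty_Suc: "covering_chains {} (Suc b) = {}"
  unfolding covering_chains_def by auto

lemma covering_chains_Suc_remove_top:
  assumes "finite \<sigma>" "\<sigma> \<noteq> {}" "C \<in> covering_chains \<sigma> (Suc b)"
  shows "\<sigma> \<in> C" "\<Union>(C - {\<sigma>}) \<subset> \<sigma>" "C - {\<sigma>} \<in> covering_chains (\<Union>(C - {\<sigma>})) b"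
proof -
  have chain: "chain\<^sub>\<subseteq> C" and U: "\<Union>C = \<sigma>" and card: "card C = Suc b"
    using assms(3) unfolding covering_chains_def by auto
  have fin: "finite C"
    using finite_mem_covering_chains[OF assms(1,3)] .
  show "\<sigma> \<in> C"
    using finite_chain_Union_mem[OF fin _ chain] U card by force
  have chain': "chain\<^sub>\<subseteq> (C - {\<sigma>})"
    using chain_subset_mono[OF chain] by blast
  have "\<Union>(C - {\<sigma>}) \<noteq> \<sigma>"
  proof (cases "C - {\<sigma>} = {}")
    case True
    then show ?thesis
      using assms(2) by (simp only: Union_empty)
  next
    case False
    then show ?thesis
      using finite_chain_Union_mem[OF _ False chain'] fin by (metis Diff_iff finite_Diff insertI1)
  qed
  then show "\<Union>(C - {\<sigma>}) \<subset> \<sigma>"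
    using U by blast
  show "C - {\<sigma>} \<in> covering_chains (\<Union>(C - {\<sigma>})) b"
    using assms(3) chain' fin \<open>\<sigma> \<in> C\<close> unfolding covering_chains_def by auto
qed

lemma covering_chains_Suc:
  assumes "finite \<sigma>" "\<sigma> \<noteq> {}"
  shows "covering_chains \<sigma> (Suc b) = (\<Union>\<tau>\<in>Pow \<sigma> - {\<sigma>}. insert \<sigma> ` covering_chains \<tau> b)"
proof (intro equalityI subsetI)
  fix C assume C: "C \<in> covering_chains \<sigma> (Suc b)"
  then have "C = insert \<sigma> (C - {\<sigma>})"
    using covering_chains_Suc_remove_top(1)[OF assms] by blast
  then show "C \<in> (\<Union>\<tau>\<in>Pow \<sigma> - {\<sigma>}. insert \<sigma> ` covering_chains \<tau> b)"
    using covering_chains_Suc_remove_top(2,3)[OF assms C] by blast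
next
  fix C assume "C \<in> (\<Union>\<tau>\<in>Pow \<sigma> - {\<sigma>}. insert \<sigma> ` covering_chains \<tau> b)"
  then obtain \<tau> C' where \<tau>: "\<tau> \<subset> \<sigma>" and C': "C' \<in> covering_chains \<tau> b" and C: "C = insert \<sigma> C'"
    by blast
  have "finite C'"
    using finite_mem_covering_chains[OF finite_subset[OF _ assms(1)] C'] \<tau> by blast
  moreover have "\<sigma> \<notin> C'" "chain\<^sub>\<subseteq> (insert \<sigma> C')"
    using C' \<tau> unfolding covering_chains_def chain_subset_def by auto
  ultimately show "C \<in> covering_chains \<sigma> (Suc b)"
    using C' \<tau> assms(2) unfolding covering_chains_def C by auto
qed

lemma card_covering_chains_Suc:
  assumes "finite \<sigma>" "\<sigma> \<noteq> {}"
  shows "card (covering_chains \<sigma> (Suc b)) = (\<Sum>\<tau>\<in>Pow \<sigma> - {\<sigma>}. card (covering_chains \<tau> b))"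
proof -
  have not_mem: "\<sigma> \<notin> C" if "\<tau> \<in> Pow \<sigma> - {\<sigma>}" "C \<in> covering_chains \<tau> b" for \<tau> C
    using that unfolding covering_chains_def by auto
  have inj: "inj_on (insert \<sigma>) (covering_chains \<tau> b)" if "\<tau> \<in> Pow \<sigma> - {\<sigma>}" for \<tau>
    using not_mem[OF that] by (intro inj_onI) (metis insert_ident)
  have "card (covering_chains \<sigma> (Suc b)) = (\<Sum>\<tau>\<in>Pow \<sigma> - {\<sigma>}. card (insert \<sigma> ` covering_chains \<tau> b))"
    unfolding covering_chains_Suc[OF assms]
  proof (rule card_UN_disjoint)
    show "finite (Pow \<sigma> - {\<sigma>})"
      using assms by simp
    show "\<forall>\<tau>\<in>Pow \<sigma> - {\<sigma>}. finite (insert \<sigma> ` covering_chains \<tau> b)"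
      using assms by (auto intro: finite_covering_chains finite_subset)
    show "\<forall>\<tau>1\<in>Pow \<sigma> - {\<sigma>}. \<forall>\<tau>2\<in>Pow \<sigma> - {\<sigma>}. \<tau>1 \<noteq> \<tau>2 \<longrightarrow>
        insert \<sigma> ` covering_chains \<tau>1 b \<inter> insert \<sigma> ` covering_chains \<tau>2 b = {}"
    proof (intro ballI impI)
      fix \<tau>1 \<tau>2 assume \<tau>: "\<tau>1 \<in> Pow \<sigma> - {\<sigma>}" "\<tau>2 \<in> Pow \<sigma> - {\<sigma>}" "\<tau>1 \<noteq> \<tau>2"
      have "C1 \<noteq> C2" if "C1 \<in> covering_chains \<tau>1 b" "C2 \<in> covering_chains \<tau>2 b" for C1 C2
        using that \<tau>(3) unfolding covering_chains_def by auto
      then show "insert \<sigma> ` covering_chains \<tau>1 b \<inter> insert \<sigma> ` covering_chains \<tau>2 b = {}"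
        using not_mem[OF \<tau>(1)] not_mem[OF \<tau>(2)] by (auto simp: insert_ident)
    qed
  qed
  also have "\<dots> = (\<Sum>\<tau>\<in>Pow \<sigma> - {\<sigma>}. card (covering_chains \<tau> b))"
    using inj by (intro sum.cong refl card_image)
  finally show ?thesis .
qed

lemma sum_Pow_card:
  fixes h :: "nat \<Rightarrow> 'b::comm_semiring_1"
  assumes "finite \<sigma>"
  shows "(\<Sum>\<tau>\<in>Pow \<sigma>. h (card \<tau>)) = (\<Sum>t\<le>card \<sigma>. of_nat (card \<sigma> choose t) * h t)"
proof -
  have "(\<Sum>\<tau>\<in>Pow \<sigma>. h (card \<tau>)) = (\<Sum>t\<le>card \<sigma>. \<Sum>\<tau>\<in>{\<tau>\<in>Pow \<sigma>. card \<tau> = t}. h (card \<tau>))"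
    by (rule sum.group[symmetric]) (use assms in \<open>auto simp: card_mono\<close>)
  also have "\<dots> = (\<Sum>t\<le>card \<sigma>. of_nat (card \<sigma> choose t) * h t)"
  proof (intro sum.cong refl)
    fix t
    have "{\<tau>\<in>Pow \<sigma>. card \<tau> = t} = {\<tau>. \<tau> \<subseteq> \<sigma> \<and> card \<tau> = t}"
      by auto
    then show "(\<Sum>\<tau>\<in>{\<tau>\<in>Pow \<sigma>. card \<tau> = t}. h (card \<tau>)) = of_nat (card \<sigma> choose t) * h t"
      using n_subsets[OF assms] by simp
  qed
  finally show ?thesis .
qed

lemma card_covering_chains:
  "finite \<sigma> \<Longrightarrow> card (covering_chains \<sigma> a) = ordered_partitions (card \<sigma>) a"
proof (induction \<sigma> arbitrary: a rule: finite_psubset_induct)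
  case (psubset \<sigma>)
  show ?case
  proof (cases a)
    case 0
    then show ?thesis
      using psubset.hyps(1) by (simp add: covering_chains_0 ordered_partitions_n_0 card_gt_0_iff)
  next
    case (Suc b)
    show ?thesis
    proof (cases "\<sigma> = {}")
      case True
      then show ?thesis using Suc by (simp add: covering_chains_empty_Suc)
    next
      case False
      note fin = psubset.hyps(1)
      have "card (covering_chains \<sigma> a) = (\<Sum>\<tau>\<in>Pow \<sigma> - {\<sigma>}. ordered_partitions (card \<tau>) b)"
        unfolding Suc card_covering_chains_Suc[OF fin False] using psubset.IH
        by (intro sum.cong refl) auto
      also have "\<dots> = (\<Sum>\<tau>\<in>Pow \<sigma>. ordered_partitions (card \<tau>) b) - ordered_partitions (card \<sigma>) b"
        using fin by (simp add: sum_diff1_nat)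
      also have "\<dots> = (\<Sum>t<card \<sigma>. (card \<sigma> choose t) * ordered_partitions t b)"
        using sum_Pow_card[OF fin, of "\<lambda>t. ordered_partitions t b"]
        by (simp add: lessThan_Suc_atMost[symmetric])
      finally show ?thesis
        using Suc ordered_partitions_Suc_right by simp
    qed
  qed
qed

section \<open>Face numbers of the barycentric subdivision\<close>

definition finite_simplicial_complex :: "'a set set \<Rightarrow> bool" where
  "finite_simplicial_complex D \<longleftrightarrow>
     finite D \<and> D \<noteq> {} \<and> (\<forall>\<sigma>\<in>D. finite \<sigma>) \<and> (\<forall>\<sigma>\<in>D. \<forall>\<tau>. \<tau> \<subseteq> \<sigma> \<longrightarrow> \<tau> \<in> D)"

text \<open>The number \<open>f\<^sub>a\<^sub>-\<^sub>1\<close> of faces with \<open>a\<close> vertices, and \<open>dim + 1\<close>.\<close>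
definition face_number :: "'a set set \<Rightarrow> nat \<Rightarrow> nat" where
  "face_number D a = card {\<sigma>\<in>D. card \<sigma> = a}"

definition max_face_card :: "'a set set \<Rightarrow> nat" where
  "max_face_card D = Max (card ` D)"

lemma finite_simplicial_complexD:
  assumes "finite_simplicial_complex D"
  shows "finite D" "{} \<in> D" "\<sigma> \<in> D \<Longrightarrow> finite \<sigma>" "\<sigma> \<in> D \<Longrightarrow> \<tau> \<subseteq> \<sigma> \<Longrightarrow> \<tau> \<in> D"
  using assms unfolding finite_simplicial_complex_def by blast+

lemma card_le_max_face_card:
  "finite_simplicial_complex D \<Longrightarrow> \<sigma> \<in> D \<Longrightarrow> card \<sigma> \<le> max_face_card D"
  unfolding max_face_card_def finite_simplicial_complex_def by simp

lemma max_face_card_attained: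
  assumes "finite_simplicial_complex D"
  obtains \<sigma> where "\<sigma> \<in> D" "card \<sigma> = max_face_card D"
proof -
  have "max_face_card D \<in> card ` D"
    using assms unfolding max_face_card_def finite_simplicial_complex_def by (intro Max_in) auto
  then show ?thesis
    using that by (metis imageE)
qed

lemma face_number_pos_iff:
  "finite_simplicial_complex D \<Longrightarrow> face_number D a > 0 \<longleftrightarrow> (\<exists>\<sigma>\<in>D. card \<sigma> = a)"
  unfolding face_number_def finite_simplicial_complex_def by (auto simp: card_gt_0_iff)

lemma face_number_max_face_card_pos:
  "finite_simplicial_complex D \<Longrightarrow> face_number D (max_face_card D) > 0"
  by (metis face_number_pos_iff max_face_card_attained)

lemma sum_by_face_card:
  fixes h :: "nat \<Rightarrow> 'b::comm_semiring_1"
  assumes "finite_simplicial_complex D"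
  shows "(\<Sum>\<sigma>\<in>D. h (card \<sigma>)) = (\<Sum>b\<le>max_face_card D. of_nat (face_number D b) * h b)"
proof -
  have "(\<Sum>\<sigma>\<in>D. h (card \<sigma>)) = (\<Sum>b\<le>max_face_card D. \<Sum>\<sigma>\<in>{\<sigma>\<in>D. card \<sigma> = b}. h (card \<sigma>))"
    using finite_simplicial_complexD(1)[OF assms] card_le_max_face_card[OF assms]
    by (intro sum.group[symmetric]) auto
  then show ?thesis
    unfolding face_number_def by simp
qed

definition face_vertex :: "hf set \<Rightarrow> hf" where
  "face_vertex \<sigma> = Face (Abs_fset \<sigma>)"

definition face_chains :: "'a set set \<Rightarrow> 'a set set set" where
  "face_chains D = {C. finite C \<and> C \<subseteq> D - {{}} \<and> chain\<^sub>\<subseteq> C}"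

lemma bsd_eq_image: "bsd D = (\<lambda>C. face_vertex ` C) ` face_chains D"
  unfolding bsd_def face_chains_def face_vertex_def chain_subset_def by blast

lemma inj_on_face_vertex: "inj_on face_vertex {\<sigma>. finite \<sigma>}"
  by (rule inj_onI) (simp add: face_vertex_def Abs_fset_inject)

lemma inj_on_image_face_vertex:
  assumes "finite_simplicial_complex D"
  shows "inj_on (\<lambda>C. face_vertex ` C) (face_chains D)"
proof -
  have "\<Union>(face_chains D) \<subseteq> {\<sigma>. finite \<sigma>}"
    using finite_simplicial_complexD(3)[OF assms] unfolding face_chains_def by blast
  then show ?thesis
    by (intro inj_on_image inj_on_subset[OF inj_on_face_vertex])
qed

lemma card_image_face_vertex:
  assumes "finite_simplicial_complex D" "C \<in> face_chains D"
  shows "card (face_vertex ` C) = card C"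
proof -
  have "C \<subseteq> {\<sigma>. finite \<sigma>}"
    using assms finite_simplicial_complexD(3)[OF assms(1)] unfolding face_chains_def by blast
  then show ?thesis
    by (intro card_image inj_on_subset[OF inj_on_face_vertex])
qed

lemma finite_simplicial_complex_bsd:
  assumes "finite_simplicial_complex D"
  shows "finite_simplicial_complex (bsd D)"
  unfolding finite_simplicial_complex_def
proof (intro conjI ballI allI impI)
  show "finite (bsd D)"
    using finite_simplicial_complexD(1)[OF assms]
    unfolding bsd_eq_image face_chains_def by (auto intro: finite_subset[of _ "Pow D"])
  have "{} \<in> face_chains D"
    unfolding face_chains_def chain_subset_def by simp
  then show "bsd D \<noteq> {}"
    unfolding bsd_eq_image by blast
  show "finite s" if "s \<in> bsd D" for s
    using that unfolding bsd_eq_image face_chains_def by auto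
  fix s t assume s: "s \<in> bsd D" and t: "t \<subseteq> s"
  then obtain C where C: "C \<in> face_chains D" and s_eq: "s = face_vertex ` C"
    unfolding bsd_eq_image by blast
  have "t = face_vertex ` {\<sigma>\<in>C. face_vertex \<sigma> \<in> t}"
    using t s_eq by blast
  moreover have "{\<sigma>\<in>C. face_vertex \<sigma> \<in> t} \<in> face_chains D"
    using C chain_subset_mono unfolding face_chains_def by auto
  ultimately show "t \<in> bsd D"
    unfolding bsd_eq_image by blast
qed

lemma face_chains_of_card:
  assumes "finite_simplicial_complex D"
  shows "{C \<in> face_chains D. card C = a} = (\<Union>\<sigma>\<in>D. covering_chains \<sigma> a)"
proof (intro equalityI subsetI)
  fix C assume C: "C \<in> {C \<in> face_chains D. card C = a}"
  then have "finite C" "C \<subseteq> D - {{}}" "chain\<^sub>\<subseteq> C"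
    unfolding face_chains_def by auto
  then have "\<Union>C \<in> D"
    using finite_chain_Union_mem finite_simplicial_complexD(2)[OF assms]
    by (cases "C = {}") auto
  moreover have "C \<in> covering_chains (\<Union>C) a"
    using C unfolding covering_chains_def face_chains_def by auto
  ultimately show "C \<in> (\<Union>\<sigma>\<in>D. covering_chains \<sigma> a)"
    by blast
next
  fix C assume "C \<in> (\<Union>\<sigma>\<in>D. covering_chains \<sigma> a)"
  then obtain \<sigma> where \<sigma>: "\<sigma> \<in> D" and C: "C \<in> covering_chains \<sigma> a"
    by blast
  have "finite C"
    using finite_mem_covering_chains[OF finite_simplicial_complexD(3)[OF assms \<sigma>] C] .
  moreover have "C \<subseteq> D - {{}}"
    using C finite_simplicial_complexD(4)[OF assms \<sigma>] unfolding covering_chains_def by blast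
  ultimately show "C \<in> {C \<in> face_chains D. card C = a}"
    using C unfolding covering_chains_def face_chains_def by blast
qed

lemma face_number_bsd:
  assumes "finite_simplicial_complex D"
  shows "face_number (bsd D) a = (\<Sum>\<sigma>\<in>D. ordered_partitions (card \<sigma>) a)"
proof -
  have "{s \<in> bsd D. card s = a} = (\<lambda>C. face_vertex ` C) ` {C \<in> face_chains D. card C = a}"
    unfolding bsd_eq_image using card_image_face_vertex[OF assms] by auto
  then have "face_number (bsd D) a = card {C \<in> face_chains D. card C = a}"
    unfolding face_number_def
    by (simp add: card_image inj_on_subset[OF inj_on_image_face_vertex[OF assms]])
  also have "\<dots> = (\<Sum>\<sigma>\<in>D. card (covering_chains \<sigma> a))"
    unfolding face_chains_of_card[OF assms]
    using finite_simplicial_complexD[OF assms] finite_covering_chains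
    by (intro card_UN_disjoint) (auto simp: covering_chains_def)
  also have "\<dots> = (\<Sum>\<sigma>\<in>D. ordered_partitions (card \<sigma>) a)"
    using card_covering_chains finite_simplicial_complexD(3)[OF assms] by (intro sum.cong) auto
  finally show ?thesis .
qed

lemma face_number_bsd_eq_sum:
  assumes "finite_simplicial_complex D"
  shows "real (face_number (bsd D) a)
    = (\<Sum>b\<le>max_face_card D. real (ordered_partitions b a) * real (face_number D b))"
  using sum_by_face_card[OF assms, of "\<lambda>b. real (ordered_partitions b a)"]
  by (simp add: face_number_bsd[OF assms] mult.commute)

lemma max_face_card_bsd:
  assumes "finite_simplicial_complex D"
  shows "max_face_card (bsd D) = max_face_card D"
proof -
  let ?T = "max_face_card D"
  have bsd: "finite_simplicial_complex (bsd D)"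
    using finite_simplicial_complex_bsd[OF assms] .
  have "card s \<le> ?T" if "s \<in> bsd D" for s
  proof (rule ccontr)
    assume "\<not> card s \<le> ?T"
    then have "face_number (bsd D) (card s) = 0"
      using face_number_bsd_eq_sum[OF assms, of "card s"] by simp
    moreover have "face_number (bsd D) (card s) > 0"
      using face_number_pos_iff[OF bsd] that by blast
    ultimately show False
      by simp
  qed
  moreover have "real (ordered_partitions ?T ?T) * real (face_number D ?T) \<le> real (face_number (bsd D) ?T)"
    unfolding face_number_bsd_eq_sum[OF assms] by (rule member_le_sum) auto
  then have "face_number (bsd D) ?T > 0"
    using face_number_max_face_card_pos[OF assms]
    by (metis fact_gt_zero of_nat_0_less_iff of_nat_mult ordered_partitions_same
        mult_pos_pos of_nat_le_iff order.strict_trans2)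
  then obtain s where "s \<in> bsd D" "card s = ?T"
    using face_number_pos_iff[OF bsd] by blast
  ultimately show ?thesis
    by (metis antisym card_le_max_face_card[OF bsd] max_face_card_attained[OF bsd])
qed

lemma finite_simplicial_complex_bsd_iterate:
  "finite_simplicial_complex D \<Longrightarrow> finite_simplicial_complex ((bsd ^^ k) D)"
  by (induction k) (simp_all add: finite_simplicial_complex_bsd)

lemma max_face_card_bsd_iterate:
  "finite_simplicial_complex D \<Longrightarrow> max_face_card ((bsd ^^ k) D) = max_face_card D"
  by (induction k) (simp_all add: max_face_card_bsd finite_simplicial_complex_bsd_iterate)

section \<open>The top eigenvector\<close>

lemma fact_less_fact: "2 \<le> T \<Longrightarrow> a < T \<Longrightarrow> (fact a :: real) < fact T"
  by (cases a) (use fact_less_mono[of 1 T] fact_less_mono[of a T] in \<open>auto simp: fact_ge_1\<close>)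

lemma sum_atMost_split_at:
  fixes f :: "nat \<Rightarrow> 'a::comm_monoid_add"
  assumes "a \<le> T"
  shows "(\<Sum>b\<le>T. f b) = (\<Sum>b<a. f b) + f a + (\<Sum>b\<in>{Suc a..T}. f b)"
proof -
  have "sum f {..T} = sum f {..a} + sum f {Suc a..T}"
    using assms by (subst sum.union_disjoint[symmetric]) (auto intro: sum.cong)
  then show ?thesis
    by (simp add: lessThan_Suc_atMost[symmetric])
qed

lemma fcoef_eq_ordered_partitions: "fcoef (int a - 1) (int b - 1) = real (ordered_partitions b a)"
proof -
  have "nat (int n + 1) = Suc n" for n
    by simp
  then show ?thesis
    by (cases a; cases b)
       (simp_all add: fcoef_def ordered_partitions_def Stirling.simps(1-3) del: Stirling.simps(4) fact_Suc)
qed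

text \<open>The numbers \<open>F\<^sub>i\<^sub>,\<^sub>d\<close>, indexed by the cardinalities \<open>a = i + 1\<close> and \<open>T = d + 1\<close>.\<close>
definition Fvec :: "nat \<Rightarrow> nat \<Rightarrow> real" where
  "Fvec T a = Fcoef (int a - 1) (int T - 1)"

lemma Fvec_top: "1 \<le> T \<Longrightarrow> Fvec T T = 1"
  unfolding Fvec_def by (subst Fcoef.simps) simp

lemma Fvec_rec:
  assumes "2 \<le> T" "a < T"
  shows "(fact T - fact a) * Fvec T a = (\<Sum>b\<in>{Suc a..T}. real (ordered_partitions b a) * Fvec T b)"
proof -
  have shift: "(\<Sum>j\<in>{int a..int T - 1}. f j) = (\<Sum>b\<in>{Suc a..T}. f (int b - 1))" for f :: "int \<Rightarrow> real"
    by (rule sum.reindex_bij_witness[of _ "\<lambda>b. int b - 1" "\<lambda>j. nat (j + 1)"]) auto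
  have "Fvec T a = 1 / (fact T - fact a) * (\<Sum>b\<in>{Suc a..T}. real (ordered_partitions b a) * Fvec T b)"
    unfolding Fvec_def using assms
    by (subst Fcoef.simps) (simp add: shift fcoef_eq_ordered_partitions Fvec_def)
  then show ?thesis
    using fact_less_fact[OF assms] by (simp add: field_simps)
qed

text \<open>Eigenvectors, for the top eigenvalue \<open>T!\<close>, of the upper triangular matrix that transforms the
  face numbers of a complex into those of its barycentric subdivision.\<close>
definition bsd_eigenvector :: "nat \<Rightarrow> (nat \<Rightarrow> real) \<Rightarrow> bool" where
  "bsd_eigenvector T X \<longleftrightarrow> (\<forall>a\<le>T. (\<Sum>b\<le>T. real (ordered_partitions b a) * X b) = fact T * X a)"

lemma sum_ordered_partitions_triangular:
  assumes "a \<le> T"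
  shows "(\<Sum>b\<le>T. real (ordered_partitions b a) * X b)
       = fact a * X a + (\<Sum>b\<in>{Suc a..T}. real (ordered_partitions b a) * X b)"
  using sum_atMost_split_at[OF assms, of "\<lambda>b. real (ordered_partitions b a) * X b"] by simp

lemma bsd_eigenvector_Fvec:
  assumes "2 \<le> T"
  shows "bsd_eigenvector T (Fvec T)"
  unfolding bsd_eigenvector_def
proof (intro allI impI)
  fix a assume a: "a \<le> T"
  show "(\<Sum>b\<le>T. real (ordered_partitions b a) * Fvec T b) = fact T * Fvec T a"
  proof (cases "a = T")
    case True
    then show ?thesis
      using sum_ordered_partitions_triangular[OF a, of "Fvec T"] by simp
  next
    case False
    then show ?thesis
      using sum_ordered_partitions_triangular[OF a, of "Fvec T"] Fvec_rec[OF assms, of a] a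
      by (simp add: algebra_simps)
  qed
qed

lemma Fvec_0: "2 \<le> T \<Longrightarrow> Fvec T 0 = 0"
  using Fvec_rec[of T 0] fact_less_fact[of T 0] by (simp add: ordered_partitions_n_0)

lemma Fvec_nonneg:
  assumes "2 \<le> T" "a \<le> T"
  shows "Fvec T a \<ge> 0"
proof -
  have "\<forall>b\<in>{a..T}. Fvec T b \<ge> 0"
    using assms(2)
  proof (induction a rule: inc_induct)
    case base
    then show ?case using assms(1) Fvec_top by simp
  next
    case (step n)
    have "(fact T - fact n) * Fvec T n \<ge> 0"
      unfolding Fvec_rec[OF assms(1) step.hyps(2)] using step.IH by (intro sum_nonneg) auto
    then have "Fvec T n \<ge> 0"
      using fact_less_fact[OF assms(1) step.hyps(2)] by (simp add: zero_le_mult_iff)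
    then show ?case
      using step.IH by (metis atLeastAtMost_iff le_antisym not_less_eq_eq)
  qed
  then show ?thesis
    using assms(2) by simp
qed

lemma Fvec_1_pos:
  assumes "2 \<le> T"
  shows "Fvec T 1 > 0"
proof -
  have "real (ordered_partitions T 1) * Fvec T T \<le> (\<Sum>b\<in>{Suc 1..T}. real (ordered_partitions b 1) * Fvec T b)"
    using assms Fvec_nonneg[OF assms] by (intro member_le_sum) auto
  moreover have "real (ordered_partitions T 1) * Fvec T T = 1"
    using assms Fvec_top[of T] by (cases T) (simp_all add: ordered_partitions_def del: Stirling.simps)
  ultimately have "(fact T - fact 1) * Fvec T 1 > 0"
    using Fvec_rec[OF assms, of 1] assms by simp
  then show ?thesis
    using fact_less_fact[OF assms, of 1] assms by (simp add: zero_less_mult_iff)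
qed

lemma sum_gbinomial_transfer:
  fixes X :: "nat \<Rightarrow> real"
  shows "(\<Sum>a\<le>T. (\<Sum>b\<le>T. real (ordered_partitions b a) * X b) * (y gchoose a)) = (\<Sum>b\<le>T. X b * y ^ b)"
proof -
  have "(\<Sum>a\<le>T. (\<Sum>b\<le>T. real (ordered_partitions b a) * X b) * (y gchoose a))
      = (\<Sum>b\<le>T. X b * (\<Sum>a\<le>T. real (ordered_partitions b a) * (y gchoose a)))"
    unfolding sum_distrib_right sum_distrib_left by (subst sum.swap) (simp add: algebra_simps)
  also have "\<dots> = (\<Sum>b\<le>T. X b * (\<Sum>a\<le>b. real (ordered_partitions b a) * (y gchoose a)))"
    by (intro sum.cong refl arg_cong[where f = "(*) _"] sum.mono_neutral_right) auto
  finally show ?thesis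
    by (simp add: sum_ordered_partitions_gbinomial)
qed

lemma gbinomial_coeffs_eq_0:
  fixes Z :: "nat \<Rightarrow> real"
  assumes Z: "\<And>y::real. (\<Sum>a\<le>T. Z a * (y gchoose a)) = 0" and "a \<le> T"
  shows "Z a = 0"
  using \<open>a \<le> T\<close>
proof (induction a rule: less_induct)
  case (less a)
  \<comment> \<open>evaluating at \<open>y = a\<close> kills the terms \<open>c > a\<close>, and the terms \<open>c < a\<close> vanish by induction\<close>
  have "(\<Sum>c\<in>{..T} - {a}. Z c * (real a gchoose c)) = 0"
    using less by (intro sum.neutral) (auto simp: binomial_gbinomial[symmetric] not_less)
  moreover have "(\<Sum>c\<le>T. Z c * (real a gchoose c)) = Z a * (real a gchoose a) + (\<Sum>c\<in>{..T} - {a}. Z c * (real a gchoose c))"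
    using less.prems by (subst sum.remove[of _ a]) auto
  ultimately show ?case
    using Z[of "real a"] by (simp add: binomial_gbinomial[symmetric])
qed

lemma bsd_eigenvector_iff_gbinomial:
  "bsd_eigenvector T X \<longleftrightarrow> (\<forall>y. fact T * (\<Sum>a\<le>T. X a * (y gchoose a)) = (\<Sum>b\<le>T. X b * y ^ b))"
proof
  assume X: "bsd_eigenvector T X"
  show "\<forall>y. fact T * (\<Sum>a\<le>T. X a * (y gchoose a)) = (\<Sum>b\<le>T. X b * y ^ b)"
  proof
    fix y :: real
    have "(\<Sum>b\<le>T. X b * y ^ b) = (\<Sum>a\<le>T. fact T * X a * (y gchoose a))"
      unfolding sum_gbinomial_transfer[symmetric] using X unfolding bsd_eigenvector_def by simp
    then show "fact T * (\<Sum>a\<le>T. X a * (y gchoose a)) = (\<Sum>b\<le>T. X b * y ^ b)"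
      by (simp add: sum_distrib_left mult.assoc)
  qed
next
  assume X: "\<forall>y. fact T * (\<Sum>a\<le>T. X a * (y gchoose a)) = (\<Sum>b\<le>T. X b * y ^ b)"
  let ?Z = "\<lambda>a. (\<Sum>b\<le>T. real (ordered_partitions b a) * X b) - fact T * X a"
  have "(\<Sum>a\<le>T. ?Z a * (y gchoose a)) = 0" for y
    using X sum_gbinomial_transfer[where X = X and T = T and y = y]
    by (simp add: left_diff_distrib sum_subtractf sum_distrib_left mult.assoc)
  then show "bsd_eigenvector T X"
    unfolding bsd_eigenvector_def using gbinomial_coeffs_eq_0[where Z = ?Z and T = T] by simp
qed

lemma bsd_eigenvector_unique:
  assumes "2 \<le> T" "bsd_eigenvector T X" "X T = 0" "a \<le> T"
  shows "X a = 0"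
proof -
  have "\<forall>b\<in>{a..T}. X b = 0"
    using assms(4)
  proof (induction a rule: inc_induct)
    case base
    then show ?case using assms(3) by simp
  next
    case (step n)
    have "(\<Sum>b\<in>{Suc n..T}. real (ordered_partitions b n) * X b) = 0"
      using step.IH by (intro sum.neutral) auto
    then have "(\<Sum>b\<le>T. real (ordered_partitions b n) * X b) = fact n * X n"
      using sum_ordered_partitions_triangular[of n T X] step.hyps by simp
    then have "fact n * X n = fact T * X n"
      using assms(2) step.hyps unfolding bsd_eigenvector_def by (metis less_imp_le)
    then have "X n = 0"
      using fact_less_fact[OF assms(1) step.hyps(2)] by (metis mult_right_cancel order_less_irrefl)
    then show ?case
      using step.IH by (metis atLeastAtMost_iff le_antisym not_less_eq_eq)
  qed
  then show ?thesis
    using assms(4) by simp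
qed

lemma Fvec_alternating_sum:
  assumes "2 \<le> T"
  shows "(\<Sum>a\<le>T. (-1) ^ a * Fvec T a) = 0"
proof -
  have "fact T * (\<Sum>a\<le>T. Fvec T a * ((-1) gchoose a)) = (\<Sum>a\<le>T. Fvec T a * (-1) ^ a)"
    using bsd_eigenvector_Fvec[OF assms] unfolding bsd_eigenvector_iff_gbinomial by blast
  then have "fact T * (\<Sum>a\<le>T. (-1) ^ a * Fvec T a) = (\<Sum>a\<le>T. (-1) ^ a * Fvec T a)"
    by (simp add: gbinomial_minus_one mult.commute)
  moreover have "(fact T :: real) \<noteq> 1"
    using fact_less_fact[OF assms, of 1] assms by simp
  ultimately show ?thesis
    by (metis mult_cancel_right1 mult.commute)
qed

text \<open>Coefficients of \<open>(-1)\<^sup>T X(-1 - y)\<close> for the polynomial \<open>X(y) = \<Sum>b\<le>T. X b * y\<^sup>b\<close>.\<close>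
definition reflect :: "nat \<Rightarrow> (nat \<Rightarrow> real) \<Rightarrow> nat \<Rightarrow> real" where
  "reflect T X c = (-1) ^ T * (\<Sum>b\<le>T. X b * (-1) ^ b * real (b choose c))"

lemma sum_reflect:
  "(\<Sum>c\<le>T. reflect T X c * \<phi> c) = (-1) ^ T * (\<Sum>b\<le>T. X b * (-1) ^ b * (\<Sum>c\<le>b. real (b choose c) * \<phi> c))"
proof -
  have "(\<Sum>c\<le>T. reflect T X c * \<phi> c) = (-1) ^ T * (\<Sum>b\<le>T. X b * (-1) ^ b * (\<Sum>c\<le>T. real (b choose c) * \<phi> c))"
    unfolding reflect_def sum_distrib_left sum_distrib_right by (subst sum.swap) (simp add: algebra_simps)
  also have "\<dots> = (-1) ^ T * (\<Sum>b\<le>T. X b * (-1) ^ b * (\<Sum>c\<le>b. real (b choose c) * \<phi> c))"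
    by (intro sum.cong refl arg_cong[where f = "(*) _"] sum.mono_neutral_right) auto
  finally show ?thesis .
qed

lemma sum_reflect_power: "(\<Sum>c\<le>T. reflect T X c * y ^ c) = (-1) ^ T * (\<Sum>b\<le>T. X b * (-1 - y) ^ b)"
proof -
  have "(-1) ^ b * (\<Sum>c\<le>b. real (b choose c) * y ^ c) = (-1 - y) ^ b" for b
  proof -
    have "(\<Sum>c\<le>b. real (b choose c) * y ^ c) = (y + 1) ^ b"
      by (simp add: binomial_ring)
    moreover have "(-1::real) ^ b * (y + 1) ^ b = ((-1) * (y + 1)) ^ b"
      by (rule power_mult_distrib[symmetric])
    ultimately show ?thesis
      by (simp add: algebra_simps)
  qed
  then show ?thesis
    unfolding sum_reflect by (simp add: mult.assoc)
qed

lemma sum_reflect_gbinomial: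
  "(\<Sum>c\<le>T. reflect T X c * (y gchoose c)) = (-1) ^ T * (\<Sum>b\<le>T. X b * ((-1 - y) gchoose b))"
proof -
  have "(-1) ^ b * (\<Sum>c\<le>b. real (b choose c) * (y gchoose c)) = ((-1 - y) gchoose b)" for b
  proof -
    have "((y + real b) gchoose b) = (\<Sum>c\<le>b. (y gchoose c) * (real b gchoose (b - c)))"
      using gbinomial_Vandermonde[of y "real b" b] by (simp add: atLeast0AtMost)
    also have "\<dots> = (\<Sum>c\<le>b. real (b choose c) * (y gchoose c))"
      by (intro sum.cong refl)
         (simp add: binomial_gbinomial[symmetric] binomial_symmetric[symmetric] mult.commute)
    finally have "(\<Sum>c\<le>b. real (b choose c) * (y gchoose c)) = ((y + real b) gchoose b)" ..
    then show ?thesis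
      by (simp add: gbinomial_negated_upper[of "-1 - y"] add.commute)
  qed
  then show ?thesis
    unfolding sum_reflect by (simp add: mult.assoc)
qed

lemma bsd_eigenvector_reflect:
  assumes "bsd_eigenvector T X"
  shows "bsd_eigenvector T (reflect T X)"
  unfolding bsd_eigenvector_iff_gbinomial
proof
  fix y :: real
  have "fact T * (\<Sum>c\<le>T. reflect T X c * (y gchoose c))
      = (-1) ^ T * (fact T * (\<Sum>b\<le>T. X b * ((-1 - y) gchoose b)))"
    unfolding sum_reflect_gbinomial by (simp add: algebra_simps)
  also have "\<dots> = (\<Sum>c\<le>T. reflect T X c * y ^ c)"
    using assms unfolding bsd_eigenvector_iff_gbinomial sum_reflect_power by simp
  finally show "fact T * (\<Sum>c\<le>T. reflect T X c * (y gchoose c)) = (\<Sum>c\<le>T. reflect T X c * y ^ c)" .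
qed

lemma reflect_top: "reflect T X T = X T"
proof -
  have "(\<Sum>b<T. X b * (-1) ^ b * real (b choose T)) = 0"
    by (intro sum.neutral) auto
  then have "(\<Sum>b\<le>T. X b * (-1) ^ b * real (b choose T)) = X T * (-1) ^ T"
    by (simp add: lessThan_Suc_atMost[symmetric])
  then show ?thesis
    unfolding reflect_def by (simp add: power_mult_distrib[symmetric])
qed

lemma bsd_eigenvector_diff:
  "bsd_eigenvector T X \<Longrightarrow> bsd_eigenvector T Y \<Longrightarrow> bsd_eigenvector T (\<lambda>a. X a - Y a)"
  unfolding bsd_eigenvector_def by (simp add: algebra_simps sum_subtractf)

text \<open>The palindromic symmetry of \<open>H\<^sub>d\<close>: \<open>F\<^sub>d\<close> is invariant under \<open>y \<mapsto> -1 - y\<close>.\<close>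
lemma reflect_Fvec:
  assumes "2 \<le> T" "a \<le> T"
  shows "reflect T (Fvec T) a = Fvec T a"
  using bsd_eigenvector_unique[OF assms(1) _ _ assms(2), of "\<lambda>c. reflect T (Fvec T) c - Fvec T c"]
    bsd_eigenvector_diff bsd_eigenvector_reflect bsd_eigenvector_Fvec[OF assms(1)]
  by (simp add: reflect_top)

lemma minus_one_power_diff: "a \<le> T \<Longrightarrow> (-1::'a::ring_1) ^ (T - a) = (-1) ^ T * (-1) ^ a"
  by (simp flip: neg_one_power_add_eq_neg_one_power_diff power_add)

lemma Fvec_linear_coeff:
  assumes "2 \<le> T"
  shows "(\<Sum>a\<le>T. Fvec T a * real (T - a) * (-1) ^ (T - a - 1)) = Fvec T 1"
proof -
  have "Fvec T a * real (T - a) * (-1) ^ (T - a - 1)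
      = (-1) ^ T * (Fvec T a * (-1) ^ a * real a) - real T * (-1) ^ T * ((-1) ^ a * Fvec T a)"
    if "a \<le> T" for a
  proof (cases "a = T")
    case False
    then have "(-1::real) ^ (T - a) = - ((-1) ^ (T - a - 1))"
      using that by (metis Suc_diff_Suc le_neq_implies_less diff_Suc_1 power_Suc mult_minus1)
    then show ?thesis
      using minus_one_power_diff[OF that, where 'a = real] that by (simp add: of_nat_diff algebra_simps)
  qed simp
  then have "(\<Sum>a\<le>T. Fvec T a * real (T - a) * (-1) ^ (T - a - 1))
      = (-1) ^ T * (\<Sum>a\<le>T. Fvec T a * (-1) ^ a * real a) - real T * (-1) ^ T * (\<Sum>a\<le>T. (-1) ^ a * Fvec T a)"
    by (simp add: sum_distrib_left sum_subtractf)
  also have "\<dots> = reflect T (Fvec T) 1"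
    unfolding reflect_def Fvec_alternating_sum[OF assms] by simp
  finally show ?thesis
    using reflect_Fvec[OF assms] assms by simp
qed

section \<open>Power iteration\<close>

lemma contracting_recurrence_tendsto_0:
  fixes u e :: "nat \<Rightarrow> real"
  assumes rec: "\<And>k. u (Suc k) = r * u k + e k" and r: "0 \<le> r" "r < 1" and e: "e \<longlonglongrightarrow> 0"
  shows "u \<longlonglongrightarrow> 0"
proof (rule LIMSEQ_I)
  fix \<epsilon> :: real assume \<epsilon>: "\<epsilon> > 0"
  obtain N where N: "\<And>k. k \<ge> N \<Longrightarrow> \<bar>e k\<bar> < \<epsilon> * (1 - r) / 2"
    using LIMSEQ_D[OF e, of "\<epsilon> * (1 - r) / 2"] \<epsilon> r by auto
  \<comment> \<open>beyond \<open>N\<close>, the excess of \<open>\<bar>u\<bar>\<close> over \<open>\<epsilon>/2\<close> contracts by the factor \<open>r\<close>\<close>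
  define w where "w k = \<bar>u k\<bar> - \<epsilon> / 2" for k
  have step: "w (Suc k) \<le> r * w k" if "k \<ge> N" for k
  proof -
    have "\<bar>u (Suc k)\<bar> \<le> r * \<bar>u k\<bar> + \<bar>e k\<bar>"
      unfolding rec using r abs_triangle_ineq[of "r * u k" "e k"] by (simp add: abs_mult)
    then show ?thesis
      using N[OF that] unfolding w_def by (simp add: algebra_simps)
  qed
  have bound: "w (N + m) \<le> r ^ m * max (w N) 0" for m
  proof (induction m)
    case (Suc m)
    have "w (N + Suc m) \<le> r * w (N + m)"
      using step[of "N + m"] by simp
    also have "\<dots> \<le> r * (r ^ m * max (w N) 0)"
      using Suc.IH r by (intro mult_left_mono) auto
    finally show ?case by simp
  qed simp
  have "(\<lambda>m. r ^ m * max (w N) 0) \<longlonglongrightarrow> 0"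
    using r by (intro tendsto_mult_left_zero LIMSEQ_power_zero) auto
  then obtain M where M: "\<And>m. m \<ge> M \<Longrightarrow> r ^ m * max (w N) 0 < \<epsilon> / 2"
    using LIMSEQ_D[of _ 0 "\<epsilon> / 2"] \<epsilon> by fastforce
  have small: "\<bar>u (N + m)\<bar> < \<epsilon>" if "m \<ge> M" for m
    using bound[of m] M[OF that] unfolding w_def by simp
  show "\<exists>no. \<forall>n\<ge>no. norm (u n - 0) < \<epsilon>"
  proof (intro exI allI impI)
    fix n assume "n \<ge> N + M"
    then show "norm (u n - 0) < \<epsilon>"
      using small[of "n - N"] by simp
  qed
qed

locale bsd_recurrence =
  fixes v :: "nat \<Rightarrow> nat \<Rightarrow> real" and T :: nat
  assumes T_ge_2: "2 \<le> T"
    and v_Suc: "\<And>k a. a \<le> T \<Longrightarrow> v (Suc k) a = (\<Sum>b\<le>T. real (ordered_partitions b a) * v k b)"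
begin

lemma v_top: "v k T = fact T ^ k * v 0 T"
proof (induction k)
  case (Suc k)
  then show ?case
    using v_Suc[of T k] sum_ordered_partitions_triangular[of T T "v k"] by simp
qed simp

lemma normalized_tendsto_0:
  assumes "v 0 T = 0" "a \<le> T"
  shows "(\<lambda>k. v k a / fact T ^ k) \<longlonglongrightarrow> 0"
proof -
  have "\<forall>b\<in>{a..T}. (\<lambda>k. v k b / fact T ^ k) \<longlonglongrightarrow> 0"
    using assms(2)
  proof (induction a rule: inc_induct)
    case base
    then show ?case
      using v_top assms(1) by simp
  next
    case (step n)
    define e where "e k = (\<Sum>b\<in>{Suc n..T}. real (ordered_partitions b n) * v k b) / fact T ^ Suc k" for k
    have "e = (\<lambda>k. (\<Sum>b\<in>{Suc n..T}. real (ordered_partitions b n) * (v k b / fact T ^ k)) / fact T)"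
      by (simp add: e_def fun_eq_iff sum_divide_distrib ac_simps)
    then have "e \<longlonglongrightarrow> (\<Sum>b\<in>{Suc n..T}. real (ordered_partitions b n) * 0) / fact T"
      using step.IH by (simp only:) (intro tendsto_intros, auto)
    then have "e \<longlonglongrightarrow> 0"
      by simp
    have rec: "v (Suc k) n / fact T ^ Suc k = (fact n / fact T) * (v k n / fact T ^ k) + e k" for k
    proof -
      have "v (Suc k) n = fact n * v k n + (\<Sum>b\<in>{Suc n..T}. real (ordered_partitions b n) * v k b)"
        using v_Suc[of n k] sum_ordered_partitions_triangular[of n T "v k"] step.hyps by simp
      then show ?thesis
        by (simp add: e_def add_divide_distrib)
    qed
    have "(\<lambda>k. v k n / fact T ^ k) \<longlonglongrightarrow> 0"
      by (rule contracting_recurrence_tendsto_0[OF rec _ _ \<open>e \<longlonglongrightarrow> 0\<close>])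
         (use fact_less_fact[OF T_ge_2 step.hyps(2)] in auto)
    then show ?case
      using step.IH by (metis atLeastAtMost_iff le_antisym not_less_eq_eq)
  qed
  then show ?thesis
    using assms(2) by simp
qed

lemma normalized_tendsto:
  assumes "a \<le> T"
  shows "(\<lambda>k. v k a / fact T ^ k) \<longlonglongrightarrow> v 0 T * Fvec T a"
proof -
  define g where "g k b = v k b - fact T ^ k * v 0 T * Fvec T b" for k b
  interpret g: bsd_recurrence g T
  proof
    fix k b assume b: "b \<le> T"
    have "(\<Sum>c\<le>T. real (ordered_partitions c b) * g k c)
        = (\<Sum>c\<le>T. real (ordered_partitions c b) * v k c)
          - fact T ^ k * v 0 T * (\<Sum>c\<le>T. real (ordered_partitions c b) * Fvec T c)"
      by (simp add: g_def right_diff_distrib sum_subtractf sum_distrib_left algebra_simps)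
    then show "g (Suc k) b = (\<Sum>c\<le>T. real (ordered_partitions c b) * g k c)"
      using b v_Suc[OF b] bsd_eigenvector_Fvec[OF T_ge_2] unfolding bsd_eigenvector_def
      by (simp add: g_def)
  qed (fact T_ge_2)
  have "(\<lambda>k. g k a / fact T ^ k + v 0 T * Fvec T a) \<longlonglongrightarrow> 0 + v 0 T * Fvec T a"
    using g.normalized_tendsto_0[OF _ assms] T_ge_2 Fvec_top[of T]
    by (intro tendsto_add tendsto_const) (simp_all add: g_def)
  moreover have "g k a / fact T ^ k + v 0 T * Fvec T a = v k a / fact T ^ k" for k
    by (simp add: g_def field_simps)
  ultimately show ?thesis
    by simp
qed

lemma alternating_sum_invariant: "(\<Sum>a\<le>T. (-1) ^ a * v k a) = (\<Sum>a\<le>T. (-1) ^ a * v 0 a)"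
proof (induction k)
  case (Suc k)
  have "(\<Sum>a\<le>T. (-1) ^ a * v (Suc k) a) = (\<Sum>a\<le>T. \<Sum>b\<le>T. v k b * ((-1) ^ a * real (ordered_partitions b a)))"
    by (simp add: v_Suc sum_distrib_left algebra_simps)
  also have "\<dots> = (\<Sum>b\<le>T. v k b * (\<Sum>a\<le>T. (-1) ^ a * real (ordered_partitions b a)))"
    by (subst sum.swap) (simp add: sum_distrib_left)
  also have "\<dots> = (\<Sum>b\<le>T. v k b * (\<Sum>a\<le>b. (-1) ^ a * real (ordered_partitions b a)))"
    by (intro sum.cong refl arg_cong[where f = "(*) _"] sum.mono_neutral_right) auto
  also have "\<dots> = (\<Sum>b\<le>T. (-1) ^ b * v k b)"
    unfolding alternating_sum_ordered_partitions by (simp add: mult.commute)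
  finally show ?case
    using Suc by simp
qed simp

end

section \<open>Smallest zeros of nearly linear functions\<close>

lemma real_zero_between:
  fixes q :: "real \<Rightarrow> real"
  assumes "continuous_on UNIV q" "q 0 * q t \<le> 0"
  obtains s where "q s = 0" "\<bar>s\<bar> \<le> \<bar>t\<bar>"
proof -
  define l u where "l = min 0 t" and "u = max 0 t"
  have "l \<le> u" and cont: "continuous_on {l..u} q"
    using continuous_on_subset[OF assms(1)] by (auto simp: l_def u_def)
  have "q l * q u \<le> 0"
    using assms(2) by (cases "0 \<le> t") (auto simp: l_def u_def mult.commute)
  then have "\<exists>x. l \<le> x \<and> x \<le> u \<and> q x = 0"
    using IVT'[OF _ _ \<open>l \<le> u\<close> cont] IVT2'[OF _ _ \<open>l \<le> u\<close> cont] by (auto simp: mult_le_0_iff)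
  then show ?thesis
    using that by (auto simp: l_def u_def)
qed

text \<open>Evaluate at \<open>t = -s A\<close>, where the sign is opposite to that of \<open>q 0 = A\<close>.\<close>
lemma small_real_zero:
  fixes q :: "real \<Rightarrow> real"
  assumes cont: "continuous_on UNIV q"
    and approx: "\<And>t. \<bar>t\<bar> \<le> 1 \<Longrightarrow> \<bar>q t - (A + B * t)\<bar> \<le> M * t\<^sup>2"
    and s: "0 \<le> s" "s * \<bar>A\<bar> \<le> 1" "M * s\<^sup>2 * \<bar>A\<bar> < B * s - 1"
  obtains t where "q t = 0" "\<bar>t\<bar> \<le> s * \<bar>A\<bar>"
proof (cases "A = 0")
  case True
  then show ?thesis
    using approx[of 0] that[of 0] by simp
next
  case False
  define t where "t = - s * A"
  have "\<bar>t\<bar> = s * \<bar>A\<bar>"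
    using s(1) by (simp add: t_def abs_mult)
  then have "A * q t \<le> A * (A + B * t) + \<bar>A\<bar> * (M * t\<^sup>2)"
    using approx[of t] s(2) abs_le_iff mult_left_mono[of "\<bar>q t - (A + B * t)\<bar>" _ "\<bar>A\<bar>"]
    by (fastforce simp: abs_mult[symmetric] right_diff_distrib)
  also have "\<dots> = A\<^sup>2 * (M * s\<^sup>2 * \<bar>A\<bar> - (B * s - 1))"
    by (simp add: t_def power2_eq_square algebra_simps abs_mult_self_eq)
  also have "\<dots> < 0"
    using s(3) False by (simp add: mult_pos_neg)
  finally have "q 0 * q t \<le> 0"
    using approx[of 0] by simp
  then obtain x where "q x = 0" "\<bar>x\<bar> \<le> \<bar>t\<bar>"
    using real_zero_between[OF cont] by blast
  then show ?thesis
    using that \<open>\<bar>t\<bar> = s * \<bar>A\<bar>\<close> by simp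
qed

lemma eventually_small_real_zero:
  fixes q :: "nat \<Rightarrow> real \<Rightarrow> real" and a b :: "nat \<Rightarrow> real"
  assumes a: "a \<longlonglongrightarrow> 0" and b: "b \<longlonglongrightarrow> \<beta>" and s: "1 / \<beta> < s" "0 < \<beta>"
    and approx: "\<And>k t. \<bar>t\<bar> \<le> 1 \<Longrightarrow> \<bar>q k t - (a k + b k * t)\<bar> \<le> M * t\<^sup>2"
    and cont: "\<And>k. continuous_on UNIV (q k)"
  shows "\<forall>\<^sub>F k in sequentially. \<exists>t. q k t = 0 \<and> \<bar>t\<bar> \<le> s * \<bar>a k\<bar>"
proof -
  have s_pos: "0 < s" "0 < \<beta> * s - 1"
    using s less_trans[of 0 "1 / \<beta>" s] by (auto simp: field_simps)
  have "(\<lambda>k. b k * s - 1 - M * s\<^sup>2 * \<bar>a k\<bar>) \<longlonglongrightarrow> \<beta> * s - 1 - M * s\<^sup>2 * \<bar>0\<bar>"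
    by (intro tendsto_intros a b)
  then have "\<forall>\<^sub>F k in sequentially. 0 < b k * s - 1 - M * s\<^sup>2 * \<bar>a k\<bar>"
    using s_pos by (auto dest: order_tendstoD(1)[of _ _ _ 0])
  moreover have "(\<lambda>k. s * \<bar>a k\<bar>) \<longlonglongrightarrow> s * \<bar>0\<bar>"
    by (intro tendsto_intros a)
  then have "\<forall>\<^sub>F k in sequentially. s * \<bar>a k\<bar> < 1"
    by (auto dest: order_tendstoD(2)[of _ 0 _ 1])
  ultimately show ?thesis
  proof eventually_elim
    case (elim k)
    obtain t where "q k t = 0" "\<bar>t\<bar> \<le> s * \<bar>a k\<bar>"
      by (rule small_real_zero[OF cont approx, of s]) (use s_pos elim in auto)
    then show ?case
      by blast
  qed
qed

lemma tendsto_squeeze_upper_bounds: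
  fixes x c :: "nat \<Rightarrow> real"
  assumes lower: "\<forall>\<^sub>F k in sequentially. c k \<le> x k" and c: "c \<longlonglongrightarrow> l"
    and upper: "\<And>u. l < u \<Longrightarrow> \<forall>\<^sub>F k in sequentially. x k \<le> u"
  shows "x \<longlonglongrightarrow> l"
proof (rule order_tendstoI)
  fix u assume "u < l"
  from lower order_tendstoD(1)[OF c this] show "\<forall>\<^sub>F k in sequentially. u < x k"
    by eventually_elim auto
next
  fix u assume "l < u"
  then have "\<forall>\<^sub>F k in sequentially. x k \<le> (l + u) / 2"
    by (intro upper) simp
  then show "\<forall>\<^sub>F k in sequentially. x k < u"
    by (rule eventually_mono) (use \<open>l < u\<close> in simp)
qed

lemma abs_const_le_of_zero:
  fixes Q :: "complex \<Rightarrow> complex"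
  assumes "Q z = 0" "norm (Q z - (of_real A + of_real B * z)) \<le> M * norm z ^ 2"
  shows "\<bar>A\<bar> \<le> \<bar>B\<bar> * norm z + M * norm z ^ 2"
proof -
  have "norm (of_real A + of_real B * z) \<le> M * norm z ^ 2"
    using assms by (metis diff_0 norm_minus_cancel)
  then show ?thesis
    using norm_triangle_ineq4[of "of_real A + of_real B * z" "of_real B * z"] by (simp add: norm_mult)
qed

locale near_linear_family =
  fixes Q :: "nat \<Rightarrow> complex \<Rightarrow> complex" and q :: "nat \<Rightarrow> real \<Rightarrow> real" and a b :: "nat \<Rightarrow> real"
    and \<beta> M :: real
  assumes a_tendsto: "a \<longlonglongrightarrow> 0" and b_tendsto: "b \<longlonglongrightarrow> \<beta>" and \<beta>_pos: "0 < \<beta>"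
    and approx: "\<And>k z. norm z \<le> 1 \<Longrightarrow> norm (Q k z - (of_real (a k) + of_real (b k) * z)) \<le> M * norm z ^ 2"
    and real: "\<And>k t. Q k (of_real t) = of_real (q k t)" and cont: "\<And>k. continuous_on UNIV (q k)"
    and finite_zeros: "\<And>k. finite {z. Q k z = 0}" and a_nonzero: "\<And>k. a k \<noteq> 0"
begin

definition min_zero :: "nat \<Rightarrow> real" where
  "min_zero k = Min (norm ` {z. Q k z = 0})"

lemma eventually_min_zero_le:
  assumes "1 / \<beta> < s"
  shows "\<forall>\<^sub>F k in sequentially. min_zero k \<le> s * \<bar>a k\<bar> \<and> (\<exists>z. Q k z = 0 \<and> norm z = min_zero k)"
proof -
  have approx_real: "\<bar>q k t - (a k + b k * t)\<bar> \<le> M * t\<^sup>2" if "\<bar>t\<bar> \<le> 1" for k t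
    using approx[of "of_real t" k] that by (simp add: real flip: of_real_mult of_real_add of_real_diff)
  have "\<forall>\<^sub>F k in sequentially. \<exists>t. q k t = 0 \<and> \<bar>t\<bar> \<le> s * \<bar>a k\<bar>"
    using approx_real cont by (intro eventually_small_real_zero[OF a_tendsto b_tendsto assms \<beta>_pos]) auto
  then show ?thesis
  proof eventually_elim
    case (elim k)
    then obtain t where t: "Q k (of_real t) = 0" "\<bar>t\<bar> \<le> s * \<bar>a k\<bar>"
      using real by auto
    then have "min_zero k \<le> \<bar>t\<bar>" "min_zero k \<in> norm ` {z. Q k z = 0}"
      unfolding min_zero_def using finite_zeros[of k] by (force intro: Min_le Min_in)+
    then show ?case
      using t by auto
  qed
qed

lemma eventually_min_zero_le_2:
  "\<forall>\<^sub>F k in sequentially. min_zero k \<le> 2 / \<beta> * \<bar>a k\<bar> \<and> (\<exists>z. Q k z = 0 \<and> norm z = min_zero k)"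
  by (rule eventually_min_zero_le) (use \<beta>_pos in \<open>simp add: divide_strict_right_mono\<close>)

lemma min_zero_tendsto_0: "min_zero \<longlonglongrightarrow> 0"
proof (rule real_tendsto_sandwich[where f = "\<lambda>_. 0" and h = "\<lambda>k. 2 / \<beta> * \<bar>a k\<bar>"])
  show "\<forall>\<^sub>F k in sequentially. 0 \<le> min_zero k"
    using eventually_min_zero_le_2 by (rule eventually_mono) (metis norm_ge_zero)
  show "\<forall>\<^sub>F k in sequentially. min_zero k \<le> 2 / \<beta> * \<bar>a k\<bar>"
    using eventually_min_zero_le_2 by (rule eventually_mono) simp
  show "(\<lambda>k. 2 / \<beta> * \<bar>a k\<bar>) \<longlonglongrightarrow> 0"
    by (rule tendsto_mult_right_zero[OF tendsto_rabs_zero[OF a_tendsto]])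
qed simp

lemma eventually_min_zero_ge: "\<forall>\<^sub>F k in sequentially. 1 / (\<bar>b k\<bar> + M * min_zero k) \<le> min_zero k / \<bar>a k\<bar>"
proof -
  have "(\<lambda>k. \<bar>b k\<bar> + M * min_zero k) \<longlonglongrightarrow> \<bar>\<beta>\<bar> + M * 0"
    by (intro tendsto_intros b_tendsto min_zero_tendsto_0)
  then have "\<forall>\<^sub>F k in sequentially. 0 < \<bar>b k\<bar> + M * min_zero k \<and> min_zero k < 1"
    using \<beta>_pos order_tendstoD(2)[OF min_zero_tendsto_0, of 1]
    by (auto dest: order_tendstoD(1)[of _ _ _ 0] intro: eventually_conj)
  with eventually_min_zero_le_2 show ?thesis
  proof eventually_elim
    case (elim k)
    then obtain z where z: "Q k z = 0" "norm z = min_zero k" "norm z \<le> 1"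
      by auto
    then have "\<bar>a k\<bar> \<le> \<bar>b k\<bar> * min_zero k + M * min_zero k ^ 2"
      using abs_const_le_of_zero[where Q = "Q k", OF z(1) approx[OF z(3)]] by simp
    then show ?case
      using elim a_nonzero[of k] by (simp add: field_simps power2_eq_square)
  qed
qed

text \<open>A real zero of size about \<open>\<bar>a\<^sub>k\<bar> / \<beta>\<close> exists by the intermediate value theorem,
  and no zero can be much smaller because the constant term \<open>a\<^sub>k\<close> has to be cancelled.\<close>
theorem min_zero_ratio_tendsto: "(\<lambda>k. min_zero k / \<bar>a k\<bar>) \<longlonglongrightarrow> 1 / \<beta>"
proof (rule tendsto_squeeze_upper_bounds[OF eventually_min_zero_ge])
  have "(\<lambda>k. \<bar>b k\<bar> + M * min_zero k) \<longlonglongrightarrow> \<bar>\<beta>\<bar> + M * 0"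
    by (intro tendsto_intros b_tendsto min_zero_tendsto_0)
  then show "(\<lambda>k. 1 / (\<bar>b k\<bar> + M * min_zero k)) \<longlonglongrightarrow> 1 / \<beta>"
    using tendsto_divide[OF tendsto_const, of _ "\<bar>\<beta>\<bar> + M * 0" _ 1] \<beta>_pos by simp
  show "\<forall>\<^sub>F k in sequentially. min_zero k / \<bar>a k\<bar> \<le> u" if "1 / \<beta> < u" for u
    using eventually_min_zero_le[OF that] a_nonzero by (auto elim!: eventually_mono simp: pos_divide_le_eq)
qed

end

section \<open>The \<open>h\<close>-polynomials of iterated subdivisions\<close>

lemma power_minus_one_remainder:
  fixes z :: complex
  assumes "norm z \<le> 1"
  shows "norm ((z - 1) ^ m - (-1) ^ m - of_nat m * (-1) ^ (m - 1) * z) \<le> 2 ^ m * norm z ^ 2"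
proof -
  define t where "t l = of_nat (m choose l) * z ^ l * (-1) ^ (m - l)" for l
  define r where "r l = (if l < 2 then 0 else t l)" for l
  have "t l = (if l = 0 then (-1) ^ m else 0) + (if l = 1 then of_nat m * (-1) ^ (m - 1) * z else 0) + r l" for l
  proof -
    consider "l = 0" | "l = 1" | "2 \<le> l"
      by linarith
    then show ?thesis
      by cases (simp_all add: t_def r_def)
  qed
  then have "(\<Sum>l\<le>m. t l) = (-1) ^ m + of_nat m * (-1) ^ (m - 1) * z + (\<Sum>l\<le>m. r l)"
    by (cases m) (simp_all add: sum.distrib)
  moreover have "(z - 1) ^ m = (\<Sum>l\<le>m. t l)"
    unfolding t_def using binomial_ring[of z "-1" m] by simp
  ultimately have "(z - 1) ^ m - (-1) ^ m - of_nat m * (-1) ^ (m - 1) * z = (\<Sum>l\<le>m. r l)"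
    by simp
  also have "norm \<dots> \<le> (\<Sum>l\<le>m. real (m choose l) * norm z ^ 2)"
  proof (rule order_trans[OF norm_sum sum_mono])
    fix l
    have "norm z ^ l \<le> norm z ^ 2" if "2 \<le> l"
      using assms that by (intro power_decreasing) auto
    then show "norm (r l) \<le> real (m choose l) * norm z ^ 2"
      by (auto simp: r_def t_def norm_mult norm_power intro: mult_left_mono)
  qed
  also have "\<dots> = 2 ^ m * norm z ^ 2"
    by (simp add: sum_distrib_right[symmetric] choose_row_sum flip: of_nat_sum)
  finally show ?thesis .
qed

lemma weighted_power_minus_one_remainder:
  fixes w :: "nat \<Rightarrow> real" and z :: complex
  assumes w: "\<And>a. 0 \<le> w a" and z: "norm z \<le> 1"
  shows "norm ((\<Sum>a\<le>T. of_real (w a) * (z - 1) ^ (T - a))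
           - (of_real (\<Sum>a\<le>T. w a * (-1) ^ (T - a))
              + of_real (\<Sum>a\<le>T. w a * real (T - a) * (-1) ^ (T - a - 1)) * z))
         \<le> (\<Sum>a\<le>T. w a * 2 ^ (T - a)) * norm z ^ 2"
proof -
  define e where "e a = (z - 1) ^ (T - a) - (-1) ^ (T - a) - of_nat (T - a) * (-1) ^ (T - a - 1) * z" for a
  define P C L :: "nat \<Rightarrow> complex" where
    "P a = of_real (w a) * (z - 1) ^ (T - a)" and
    "C a = of_real (w a) * (-1) ^ (T - a)" and
    "L a = of_real (w a) * of_nat (T - a) * (-1) ^ (T - a - 1)" for a
  have "(\<Sum>a\<le>T. of_real (w a) * e a) = (\<Sum>a\<le>T. P a - C a - L a * z)"
    by (intro sum.cong refl) (simp add: e_def P_def C_def L_def right_diff_distrib mult.assoc)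
  also have "\<dots> = sum P {..T} - sum C {..T} - sum L {..T} * z"
    by (simp only: sum_subtractf sum_distrib_right)
  finally have "(\<Sum>a\<le>T. of_real (w a) * (z - 1) ^ (T - a))
           - (of_real (\<Sum>a\<le>T. w a * (-1) ^ (T - a))
              + of_real (\<Sum>a\<le>T. w a * real (T - a) * (-1) ^ (T - a - 1)) * z)
      = (\<Sum>a\<le>T. of_real (w a) * e a)"
    by (simp add: P_def C_def L_def)
  also have "norm \<dots> \<le> (\<Sum>a\<le>T. w a * (2 ^ (T - a) * norm z ^ 2))"
  proof (rule order_trans[OF norm_sum sum_mono])
    fix a
    have "norm (e a) \<le> 2 ^ (T - a) * norm z ^ 2"
      unfolding e_def by (rule power_minus_one_remainder[OF z])
    then show "norm (of_real (w a) * e a) \<le> w a * (2 ^ (T - a) * norm z ^ 2)"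
      using w[of a] by (simp add: norm_mult mult_left_mono)
  qed
  finally show ?thesis
    by (simp add: sum_distrib_right mult.assoc)
qed

lemma cdim_eq_max_face_card: "cdim D = int (max_face_card D) - 1"
  by (simp add: cdim_def max_face_card_def)

lemma fvec_eq_face_number: "fvec D (int a - 1) = face_number D a"
  unfolding fvec_def face_number_def by simp

lemma sum_int_shift: "(\<Sum>i\<in>{-1..int T - 1}. f i) = (\<Sum>a\<le>T. f (int a - 1))"
  by (rule sum.reindex_bij_witness[of _ "\<lambda>a. int a - 1" "\<lambda>i. nat (i + 1)"]) auto

lemma poly_hpoly:
  "poly (hpoly D) z = (\<Sum>a\<le>max_face_card D. of_nat (face_number D a) * (z - 1) ^ (max_face_card D - a))"
proof -
  have "poly (hpoly D) z = (\<Sum>i\<in>{-1..cdim D}. of_nat (fvec D i) * (z - 1) ^ nat (cdim D - i))"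
    unfolding hpoly_def poly_pcompose poly_sum poly_monom by simp
  then show ?thesis
    unfolding cdim_eq_max_face_card sum_int_shift fvec_eq_face_number by (simp add: nat_diff_distrib)
qed

lemma red_euler_eq:
  assumes "finite_simplicial_complex D"
  shows "red_euler D = - (\<Sum>a\<le>max_face_card D. (-1) ^ a * real (face_number D a))"
proof -
  have "(-1::real) powi (int a - 1) = - ((-1) ^ a)" for a
    by (simp add: power_int_diff)
  moreover have "red_euler D = (\<Sum>a\<le>max_face_card D. of_nat (face_number D a) * (-1) powi (int a - 1))"
    unfolding red_euler_def by (rule sum_by_face_card[OF assms])
  ultimately show ?thesis
    by (simp add: sum_negf mult.commute)
qed

lemma Hcoef_1_eq_Fvec:
  assumes "2 \<le> T"
  shows "Hcoef 1 (int T - 1) = Fvec T 1"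
proof -
  have pcompose_monom: "pcompose (monom c m) [:-1, 1:] = smult c ([:-1, 1:] ^ m)" for c :: real and m
    by (subst poly_eq_poly_eq_iff[symmetric]) (simp add: fun_eq_iff poly_pcompose poly_monom)
  have H: "Hpoly (int T - 1) = (\<Sum>a\<le>T. smult (Fvec T a) ([:-1, 1:] ^ (T - a)))"
    unfolding Hpoly_def Fpoly_def pcompose_sum pcompose_monom sum_int_shift Fvec_def
    by (intro sum.cong refl) (simp add: nat_diff_distrib)
  \<comment> \<open>only \<open>a = 1\<close> contributes to the coefficient of \<open>z\<^sup>T\<^sup>-\<^sup>1\<close>, since \<open>F\<^sub>-\<^sub>1\<^sub>,\<^sub>d = 0\<close>\<close>
  have vanish: "coeff (smult (Fvec T a) ([:-1, 1:] ^ (T - a))) (T - 1) = 0" if "a \<le> T" "a \<noteq> 1" for a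
  proof (cases "a = 0")
    case False
    then have "degree ([:-1, 1:] ^ (T - a) :: real poly) < T - 1"
      using that by (simp add: degree_linear_power)
    then show ?thesis
      by (simp add: coeff_eq_0)
  qed (simp add: Fvec_0[OF assms])
  have "(\<Sum>a\<in>{..T} - {1}. coeff (smult (Fvec T a) ([:-1, 1:] ^ (T - a))) (T - 1)) = 0"
    using vanish by (intro sum.neutral) auto
  then have "coeff (Hpoly (int T - 1)) (T - 1) = coeff (smult (Fvec T 1) ([:-1, 1:] ^ (T - 1))) (T - 1)"
    unfolding H coeff_sum using assms by (subst sum.remove[of _ 1]) auto
  then show ?thesis
    unfolding Hcoef_def using assms by (simp add: nat_diff_distrib coeff_linear_power)
qed

lemma sum_minus_one_power_diff:
  "(\<Sum>a\<le>T. w a * (-1::real) ^ (T - a)) = (-1) ^ T * (\<Sum>a\<le>T. (-1) ^ a * w a)"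
  by (simp add: sum_distrib_left minus_one_power_diff algebra_simps)

lemma min_zero_modulus_eq_0:
  assumes "p \<noteq> 0" "poly p 0 = 0"
  shows "min_zero_modulus p = 0"
proof -
  have fin: "finite (norm ` {z. poly p z = 0})"
    using poly_roots_finite[OF assms(1)] by simp
  have zero: "0 \<in> norm ` {z. poly p z = 0}"
    using assms(2) by force
  have "Min (norm ` {z. poly p z = 0}) \<le> 0"
    using Min_le[OF fin zero] .
  moreover have "0 \<le> Min (norm ` {z. poly p z = 0})"
    using fin zero by (subst Min_ge_iff) auto
  ultimately show ?thesis
    unfolding min_zero_modulus_def by simp
qed

locale iterated_bsd =
  fixes D :: scomplex
  assumes complex: "finite_simplicial_complex D" and two_le_max_face_card: "2 \<le> max_face_card D"
begin

abbreviation T :: nat where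
  "T \<equiv> max_face_card D"

definition fnum :: "nat \<Rightarrow> nat \<Rightarrow> real" where
  "fnum k a = real (face_number ((bsd ^^ k) D) a)"

sublocale bsd_recurrence fnum T
proof
  fix k a
  show "fnum (Suc k) a = (\<Sum>b\<le>T. real (ordered_partitions b a) * fnum k b)"
    using face_number_bsd_eq_sum[OF finite_simplicial_complex_bsd_iterate[OF complex, of k], of a]
    by (simp add: fnum_def max_face_card_bsd_iterate[OF complex])
qed (fact two_le_max_face_card)

lemma poly_hpoly_iterate:
  "poly (hpoly ((bsd ^^ k) D)) z = (\<Sum>a\<le>T. of_real (fnum k a) * (z - 1) ^ (T - a))"
  using poly_hpoly[of "(bsd ^^ k) D" z] by (simp add: fnum_def max_face_card_bsd_iterate[OF complex])

lemma fnum_top_pos: "fnum k T > 0"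
  using v_top[of k] face_number_max_face_card_pos[OF complex] by (simp add: fnum_def)

text \<open>The constant and the linear coefficient of the \<open>h\<close>-polynomial of \<open>bsd\<^sup>k D\<close>.\<close>
definition h0 :: real where
  "h0 = (\<Sum>a\<le>T. fnum 0 a * (-1) ^ (T - a))"

definition h1 :: "nat \<Rightarrow> real" where
  "h1 k = (\<Sum>a\<le>T. fnum k a * real (T - a) * (-1) ^ (T - a - 1))"

lemma h0_eq: "(\<Sum>a\<le>T. fnum k a * (-1) ^ (T - a)) = h0"
  unfolding h0_def sum_minus_one_power_diff alternating_sum_invariant[of k] ..

lemma poly_hpoly_iterate_0: "poly (hpoly ((bsd ^^ k) D)) 0 = of_real h0"
  unfolding poly_hpoly_iterate h0_eq[of k, symmetric] of_real_sum by simp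

lemma abs_red_euler: "\<bar>red_euler D\<bar> = \<bar>h0\<bar>"
proof -
  have "h0 = (-1) ^ T * (\<Sum>a\<le>T. (-1) ^ a * real (face_number D a))"
    unfolding h0_def sum_minus_one_power_diff by (simp add: fnum_def)
  then show ?thesis
    unfolding red_euler_eq[OF complex] by (simp add: abs_mult power_abs)
qed

lemma h1_normalized_tendsto: "(\<lambda>k. h1 k / fact T ^ k) \<longlonglongrightarrow> fnum 0 T * Fvec T 1"
proof -
  have lim: "(\<lambda>k. \<Sum>a\<le>T. (fnum k a / fact T ^ k) * real (T - a) * (-1) ^ (T - a - 1))
      \<longlonglongrightarrow> (\<Sum>a\<le>T. (fnum 0 T * Fvec T a) * real (T - a) * (-1) ^ (T - a - 1))"
    by (intro tendsto_intros normalized_tendsto) auto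
  have "(\<lambda>k. h1 k / fact T ^ k) = (\<lambda>k. \<Sum>a\<le>T. (fnum k a / fact T ^ k) * real (T - a) * (-1) ^ (T - a - 1))"
    by (simp add: fun_eq_iff h1_def sum_divide_distrib)
  moreover have "(\<Sum>a\<le>T. (fnum 0 T * Fvec T a) * real (T - a) * (-1) ^ (T - a - 1)) = fnum 0 T * Fvec T 1"
    using Fvec_linear_coeff[OF T_ge_2] by (simp only: mult.assoc flip: sum_distrib_left)
  ultimately show ?thesis
    using lim by simp
qed

lemma hpoly_iterate_nonzero: "hpoly ((bsd ^^ k) D) \<noteq> 0"
proof
  assume "hpoly ((bsd ^^ k) D) = 0"
  then have "(\<Sum>a\<le>T. of_real (fnum k a) * (1 - 1) ^ (T - a) :: complex) = 0"
    using poly_hpoly_iterate[of k 1] by simp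
  moreover have "(\<Sum>a<T. of_real (fnum k a) * (1 - 1) ^ (T - a) :: complex) = 0"
    by (intro sum.neutral) auto
  ultimately show False
    using fnum_top_pos[of k] by (simp add: lessThan_Suc_atMost[symmetric])
qed

lemma normalized_hpoly_remainder:
  obtains M where "\<And>k z. norm z \<le> 1 \<Longrightarrow>
    norm (poly (hpoly ((bsd ^^ k) D)) z / of_real (fact T ^ k)
          - (of_real (h0 / fact T ^ k) + of_real (h1 k / fact T ^ k) * z)) \<le> M * norm z ^ 2"
proof -
  define s where "s k = (\<Sum>a\<le>T. fnum k a * 2 ^ (T - a)) / fact T ^ k" for k
  have "s = (\<lambda>k. \<Sum>a\<le>T. (fnum k a / fact T ^ k) * 2 ^ (T - a))"
    by (simp add: s_def fun_eq_iff sum_divide_distrib)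
  then have "s \<longlonglongrightarrow> (\<Sum>a\<le>T. (fnum 0 T * Fvec T a) * 2 ^ (T - a))"
    by (simp only:) (intro tendsto_intros normalized_tendsto, simp)
  then have "Bseq s"
    by (rule convergent_imp_Bseq[OF convergentI])
  then obtain M where M: "\<And>k. norm (s k) \<le> M"
    unfolding Bseq_def by blast
  have "norm (poly (hpoly ((bsd ^^ k) D)) z / of_real (fact T ^ k)
          - (of_real (h0 / fact T ^ k) + of_real (h1 k / fact T ^ k) * z)) \<le> M * norm z ^ 2"
    if "norm z \<le> 1" for k z
  proof -
    have fnum_nonneg: "0 \<le> fnum k a" for a
      by (simp add: fnum_def)
    have "norm (poly (hpoly ((bsd ^^ k) D)) z - (of_real h0 + of_real (h1 k) * z))
        \<le> (\<Sum>a\<le>T. fnum k a * 2 ^ (T - a)) * norm z ^ 2"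
      unfolding poly_hpoly_iterate h1_def h0_eq[of k, symmetric]
      by (rule weighted_power_minus_one_remainder[OF fnum_nonneg that])
    also have "\<dots> = fact T ^ k * (s k * norm z ^ 2)"
      by (simp add: s_def)
    also have "\<dots> \<le> fact T ^ k * (M * norm z ^ 2)"
      using M[of k] by (intro mult_left_mono mult_right_mono) auto
    finally have bound: "norm (poly (hpoly ((bsd ^^ k) D)) z - (of_real h0 + of_real (h1 k) * z))
        \<le> fact T ^ k * (M * norm z ^ 2)" .
    have "poly (hpoly ((bsd ^^ k) D)) z / of_real (fact T ^ k)
          - (of_real (h0 / fact T ^ k) + of_real (h1 k / fact T ^ k) * z)
        = (poly (hpoly ((bsd ^^ k) D)) z - (of_real h0 + of_real (h1 k) * z)) / of_real (fact T ^ k)"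
      by (simp add: diff_divide_distrib add_divide_distrib of_real_divide)
    then show ?thesis
      using bound by (simp add: norm_divide norm_power pos_divide_le_eq mult.commute)
  qed
  then show ?thesis
    using that by blast
qed

lemma min_zero_modulus_tendsto:
  assumes "h0 \<noteq> 0"
  shows "(\<lambda>k. min_zero_modulus (hpoly ((bsd ^^ k) D)) * fact T ^ k) \<longlonglongrightarrow> \<bar>h0\<bar> / (fnum 0 T * Fvec T 1)"
proof -
  obtain M where M: "\<And>k z. norm z \<le> 1 \<Longrightarrow>
    norm (poly (hpoly ((bsd ^^ k) D)) z / of_real (fact T ^ k)
          - (of_real (h0 / fact T ^ k) + of_real (h1 k / fact T ^ k) * z)) \<le> M * norm z ^ 2"
    using normalized_hpoly_remainder by blast
  have fact_gt_1: "1 < (fact T :: real)"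
    using fact_less_fact[OF T_ge_2, of 1] T_ge_2 by simp
  define Q where "Q k z = poly (hpoly ((bsd ^^ k) D)) z / of_real (fact T ^ k)" for k z
  define q where "q k t = (\<Sum>a\<le>T. fnum k a * (t - 1) ^ (T - a)) / fact T ^ k" for k t
  have zeros: "{z. Q k z = 0} = {z. poly (hpoly ((bsd ^^ k) D)) z = 0}" for k
    by (simp add: Q_def)
  interpret near_linear_family Q q "\<lambda>k. h0 / fact T ^ k" "\<lambda>k. h1 k / fact T ^ k" "fnum 0 T * Fvec T 1" M
  proof
    show "(\<lambda>k. h0 / fact T ^ k) \<longlonglongrightarrow> 0"
      by (rule LIMSEQ_divide_realpow_zero[OF fact_gt_1])
    show "0 < fnum 0 T * Fvec T 1"
      using fnum_top_pos Fvec_1_pos[OF T_ge_2] by simp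
    show "Q k (of_real t) = of_real (q k t)" for k t
      unfolding Q_def q_def poly_hpoly_iterate by simp
    show "continuous_on UNIV (q k)" for k
      unfolding q_def by (intro continuous_intros) (use fact_gt_1 in simp)
    show "finite {z. Q k z = 0}" for k
      unfolding zeros by (rule poly_roots_finite[OF hpoly_iterate_nonzero])
    show "h0 / fact T ^ k \<noteq> 0" for k
      using assms by simp
    show "norm (Q k z - (of_real (h0 / fact T ^ k) + of_real (h1 k / fact T ^ k) * z)) \<le> M * norm z ^ 2"
      if "norm z \<le> 1" for k z
      unfolding Q_def by (rule M[OF that])
  qed (rule h1_normalized_tendsto)
  have "(\<lambda>k. \<bar>h0\<bar> * (min_zero_modulus (hpoly ((bsd ^^ k) D)) * fact T ^ k / \<bar>h0\<bar>))
      \<longlonglongrightarrow> \<bar>h0\<bar> * (1 / (fnum 0 T * Fvec T 1))"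
    using min_zero_ratio_tendsto unfolding min_zero_def zeros min_zero_modulus_def[symmetric]
    by (intro tendsto_mult_left) (simp add: abs_divide)
  then show ?thesis
    using assms by simp
qed

theorem abs_red_euler_asymp_equiv:
  "(\<lambda>k. \<bar>red_euler D\<bar>) \<sim>[sequentially]
     (\<lambda>k. Fvec T 1 * fnum 0 T * min_zero_modulus (hpoly ((bsd ^^ k) D)) * fact T ^ k)"
proof (cases "h0 = 0")
  case True
  then have "min_zero_modulus (hpoly ((bsd ^^ k) D)) = 0" for k
    using min_zero_modulus_eq_0 hpoly_iterate_nonzero poly_hpoly_iterate_0 by simp
  then show ?thesis
    using True by (simp add: abs_red_euler)
next
  case False
  have "(\<lambda>k. (fnum 0 T * Fvec T 1) * (min_zero_modulus (hpoly ((bsd ^^ k) D)) * fact T ^ k))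
      \<longlonglongrightarrow> (fnum 0 T * Fvec T 1) * (\<bar>h0\<bar> / (fnum 0 T * Fvec T 1))"
    by (intro tendsto_mult_left min_zero_modulus_tendsto False)
  moreover have "(fnum 0 T * Fvec T 1) * (\<bar>h0\<bar> / (fnum 0 T * Fvec T 1)) = \<bar>h0\<bar>"
    using fnum_top_pos[of 0] Fvec_1_pos[OF T_ge_2] by simp
  ultimately have "(\<lambda>k. Fvec T 1 * fnum 0 T * min_zero_modulus (hpoly ((bsd ^^ k) D)) * fact T ^ k) \<longlonglongrightarrow> \<bar>h0\<bar>"
    by (simp add: ac_simps)
  then have "(\<lambda>k. \<bar>h0\<bar> / (Fvec T 1 * fnum 0 T * min_zero_modulus (hpoly ((bsd ^^ k) D)) * fact T ^ k))
      \<longlonglongrightarrow> \<bar>h0\<bar> / \<bar>h0\<bar>"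
    using False by (intro tendsto_divide tendsto_const) auto
  then show ?thesis
    using False unfolding abs_red_euler by (intro asymp_equivI') simp
qed

end

section \<open>The complex \<open>\<Delta>\<^sub>n\<close>\<close>

lemma prime_factors_prod_primes:
  fixes P :: "nat set"
  assumes "finite P" "\<forall>p\<in>P. prime p"
  shows "prime_factors (\<Prod>P) = P"
proof -
  have "0 \<notin> P"
    using assms(2) by auto
  then have "prime_factors (\<Prod>P) = (\<Union>p\<in>P. prime_factors p)"
    using prime_factors_prod[OF assms(1), of "\<lambda>p. p"] by simp
  then show ?thesis
    using assms(2) by (auto simp: prime_prime_factors)
qed

lemma prod_prime_factors_squarefree:
  fixes k :: nat
  assumes "k \<noteq> 0" "squarefree k"
  shows "\<Prod>(prime_factors k) = k"
proof -
  have "(\<Prod>p\<in>prime_factors k. p ^ multiplicity p k) = (\<Prod>p\<in>prime_factors k. p)"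
    using assms by (intro prod.cong refl) (simp add: squarefree_factorial_semiring')
  then show ?thesis
    using prod_prime_factors[OF assms(1)] by simp
qed

lemma Delta_eq_image: "Delta n = (\<lambda>k. Prim ` prime_factors k) ` {k. 1 \<le> k \<and> k \<le> n \<and> squarefree k}"
  unfolding Delta_def by blast

text \<open>A subset of the prime factors of a squarefree \<open>k \<le> n\<close> is the set of prime factors of a
  divisor of \<open>k\<close>, namely their product.\<close>
lemma finite_simplicial_complex_Delta:
  assumes "1 \<le> n"
  shows "finite_simplicial_complex (Delta n)"
  unfolding finite_simplicial_complex_def
proof (intro conjI ballI allI impI)
  show "finite (Delta n)"
    unfolding Delta_eq_image by simp
  show "Delta n \<noteq> {}"
    unfolding Delta_eq_image using assms by auto
  show "finite \<sigma>" if "\<sigma> \<in> Delta n" for \<sigma>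
    using that unfolding Delta_eq_image by auto
  fix \<sigma> \<tau> assume "\<sigma> \<in> Delta n" and \<tau>: "\<tau> \<subseteq> \<sigma>"
  then obtain k where k: "1 \<le> k" "k \<le> n" "squarefree k" and \<sigma>: "\<sigma> = Prim ` prime_factors k"
    unfolding Delta_eq_image by blast
  define P where "P = {p \<in> prime_factors k. Prim p \<in> \<tau>}"
  have \<tau>_eq: "\<tau> = Prim ` P"
    using \<tau> \<sigma> unfolding P_def by blast
  have "\<Prod>P dvd \<Prod>(prime_factors k)"
    by (rule prod_dvd_prod_subset) (auto simp: P_def)
  then have dvd: "\<Prod>P dvd k"
    using prod_prime_factors_squarefree[of k] k by simp
  moreover have "prime_factors (\<Prod>P) = P"
    by (rule prime_factors_prod_primes) (auto simp: P_def)
  ultimately show "\<tau> \<in> Delta n"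
    unfolding Delta_eq_image \<tau>_eq using k squarefree_mono[OF dvd k(3)]
    by (intro image_eqI[of _ _ "\<Prod>P"]) (auto dest: dvd_imp_le intro: Nat.gr0I)
qed

lemma two_le_max_face_card_Delta:
  assumes "6 \<le> n"
  shows "2 \<le> max_face_card (Delta n)"
proof -
  have "{2..<3::nat} = {2}"
    by auto
  then have primes: "prime (2::nat)" "prime (3::nat)"
    by (simp_all add: prime_nat_iff')
  then have "squarefree (6::nat)"
    using squarefree_mult_coprime[of "2::nat" 3] squarefree_prime[OF primes(1)] squarefree_prime[OF primes(2)]
      primes_coprime[OF primes] by simp
  moreover have "prime_factors (6::nat) = {2, 3}"
    using prime_factors_product[of "2::nat" 3] primes by (simp add: prime_prime_factors insert_commute)
  ultimately have "{Prim 2, Prim 3} \<in> Delta n"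
    unfolding Delta_eq_image using assms by (intro image_eqI[of _ _ 6]) auto
  moreover have "card {Prim 2, Prim 3} = 2"
    by simp
  ultimately show ?thesis
    using card_le_max_face_card[OF finite_simplicial_complex_Delta, of n] assms by (metis one_le_numeral order_trans)
qed

theorem corollary3p1:
  fixes n :: nat
  assumes "n \<ge> 6"
  shows "(\<lambda>k::nat. \<bar>red_euler (Delta n)\<bar>) \<sim>[sequentially]
         (\<lambda>k. Hcoef 1 (cdim (Delta n)) * real (fvec (Delta n) (cdim (Delta n)))
               * min_zero_modulus (hpoly ((bsd ^^ k) (Delta n)))
               * fact (nat (cdim (Delta n) + 1)) ^ k)"
proof -
  interpret iterated_bsd "Delta n"
    using finite_simplicial_complex_Delta two_le_max_face_card_Delta assms by unfold_locales auto
  have "Hcoef 1 (cdim (Delta n)) = Fvec (max_face_card (Delta n)) 1"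
    unfolding cdim_eq_max_face_card by (rule Hcoef_1_eq_Fvec[OF T_ge_2])
  moreover have "real (fvec (Delta n) (cdim (Delta n))) = fnum 0 (max_face_card (Delta n))"
    unfolding cdim_eq_max_face_card fvec_eq_face_number fnum_def by simp
  moreover have "fact (nat (cdim (Delta n) + 1)) = (fact (max_face_card (Delta n)) :: real)"
    unfolding cdim_eq_max_face_card by simp
  ultimately show ?thesis
    using abs_red_euler_asymp_equiv by simp
qed

end
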